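(* For a weakly coupled POMDP and horizon $T$, the values of the Lagrangian relaxations (relaxing the linking constraints) of MILP (IP) and of the nonlinear program (UB) are equal; denoting this common value by $z_{\mathrm{LR}}$, $$z_{\mathrm{UB}}\le z_{\mathrm{LR}}\le z_{\mathrm R^{\mathrm c}}\le z_{\mathrm R}.$$
   Context: Weakly coupled POMDP: components $m\in[M]$, each a POMDP $(\mathcal X_S^m,\mathcal X_O^m,\mathcal X_A^m,\mathfrak p^m,\mathbf r^m)$ (initial $p^m(s)$, emissions $p^m(o|s)$, transitions $p^m(s'|s,a)$, reward $r^m$), $\mathbf D^m:\mathcal X_A^m\to\mathbb R^q$, $\mathbf b\in\mathbb R^q_{\ge0}$; full action space $\mathcal X_A=\{\mathbf a\in\prod_m\mathcal X_A^m:\sum_m\mathbf D^m(a^m)\le\mathbf b\}$ nonempty. For a POMDP, $\mathcal Q(T,\mathcal X_S,\mathcal X_O,\mathcal X_A,\mathfrak p)$: pairs $(\tau,\delta)$, $\delta^t_{a|o}\ge0$, $\sum_a\delta^t_{a|o}=1$, nonnegative $\tau$ with (i) $\tau^1_s=p(s)$; (ii) $\sum_{o,a}\tau^t_{soa}=\nu^t_s$, $\nu^1_s=\tau^1_s$, $\nu^t_s=\sum_{s'',a''}\tau^{t-1}_{s''a''s}$; (iii) $\sum_{\bar s}\tau^t_{sa\bar s}=\sum_o\tau^t_{soa}$; (iv) $\tau^t_{sas'}=p(s'|s,a)\sum_{\bar s}\tau^t_{sa\bar s}$; (v) $\tau^t_{soa}=\delta^t_{a|o}p(o|s)\sum_{o',a'}\tau^t_{so'a'}$.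 $\mathcal Q^{\mathrm d}$: same but $\delta^t_{a|o}\in\{0,1\}$ and (v) replaced by $\tau^t_{soa}\le p(o|s)\nu^t_s$, $\tau^t_{soa}\le\delta^t_{a|o}$, $\tau^t_{soa}\ge p(o|s)\nu^t_s+\delta^t_{a|o}-1$. (IP): maximize $\sum_t\sum_m\sum_{s,a,s'}r^m(s,a,s')\tau^{t,m}_{sas'}$ s.t. $(\tau^m,\delta^m)\in\mathcal Q^{\mathrm d}(T,\mathcal X_S^m,\mathcal X_O^m,\mathcal X_A^m,\mathfrak p^m)$, $\tau^{t,m}_a=\sum_{s,o}\tau^{t,m}_{soa}$, and linking constraints $\sum_m\sum_a\mathbf D^m(a)\tau^{t,m}_a\le\mathbf b$ ($t\in[T]$). (UB): same with $\mathcal Q$ in place of $\mathcal Q^{\mathrm d}$; value $z_{\mathrm{UB}}$. The Lagrangian relaxation of (IP) (resp. (UB)) is $\min_{\beta\in\mathbb R_+^{T\times q}}$ of the maximum, over the constraints other than the linking constraints, of $\sum_t\sum_m\sum_{s,a,s'}r^m(s,a,s')\tau^{t,m}_{sas'}+\sum_t(\beta^t)^\top(\mathbf b-\sum_m\sum_a\mathbf D^m(a)\tau^{t,m}_a)$. $z_{\mathrm R}$: value of the linear relaxation of (IP) ($\delta^{t,m}_{a|o}\in[0,1]$). $z_{\mathrm R^{\mathrm c}}$: value of that linear relaxation with, for each $m$ and $t\ge2$, additional nonnegative variables $\tau^{t,m}_{s'a'soa}$ and constraints $\sum_{s',a'}\tau^{t,m}_{s'a'soa}=\tau^{t,m}_{soa}$;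 $\sum_a\tau^{t,m}_{s'a'soa}=p^m(o|s)p^m(s|s',a')\sum_{\bar s}\tau^{t-1,m}_{s'a'\bar s}$; $\tau^{t,m}_{s'a'soa}=p^m(s|s',a',o)\sum_{\bar s}\tau^{t,m}_{s'a'\bar soa}$ with $p^m(s|s',a',o)=p^m(o|s)p^m(s|s',a')/\sum_{\bar s}p^m(o|\bar s)p^m(\bar s|s',a')$. *)

theory Defs
  imports Complex_Main
begin

text \<open>Data: p0 s = p(s),
  pe s ob = p(ob|s), pt s a s' = p(s'|s,a).  Decision variables of the occupation
  formulation: tsoa t s ob a = tau^t_{soa}, tsas t s a s' = tau^t_{sas'},
  dl t ob a = delta^t_{a|ob}.  tau^1_s is fixed to p(s) by constraint (i), so it
  is substituted directly.\<close>

definition pomdp :: "'s set \<Rightarrow> 'ob set \<Rightarrow> 'a set \<Rightarrow> ('s \<Rightarrow> real) \<Rightarrow>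
    ('s \<Rightarrow> 'ob \<Rightarrow> real) \<Rightarrow> ('s \<Rightarrow> 'a \<Rightarrow> 's \<Rightarrow> real) \<Rightarrow> bool" where
  "pomdp S Ob A p0 pe pt \<longleftrightarrow>
     finite S \<and> finite Ob \<and> finite A \<and> S \<noteq> {} \<and> Ob \<noteq> {} \<and> A \<noteq> {} \<and>
     (\<forall>s\<in>S. p0 s \<ge> 0) \<and> (\<Sum>s\<in>S. p0 s) = 1 \<and>
     (\<forall>s\<in>S. (\<forall>ob\<in>Ob. pe s ob \<ge> 0) \<and> (\<Sum>ob\<in>Ob. pe s ob) = 1) \<and>
     (\<forall>s\<in>S. \<forall>a\<in>A. (\<forall>s'\<in>S. pt s a s' \<ge> 0) \<and> (\<Sum>s'\<in>S. pt s a s') = 1)"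

definition nu :: "'s set \<Rightarrow> 'a set \<Rightarrow> ('s \<Rightarrow> real) \<Rightarrow>
    (nat \<Rightarrow> 's \<Rightarrow> 'a \<Rightarrow> 's \<Rightarrow> real) \<Rightarrow> nat \<Rightarrow> 's \<Rightarrow> real" where
  "nu S A p0 tsas t s =
     (if t = 1 then p0 s else (\<Sum>s''\<in>S. \<Sum>a''\<in>A. tsas (t - 1) s'' a'' s))"

definition Q_base :: "nat \<Rightarrow> 's set \<Rightarrow> 'ob set \<Rightarrow> 'a set \<Rightarrow> ('s \<Rightarrow> real) \<Rightarrow>
    ('s \<Rightarrow> 'a \<Rightarrow> 's \<Rightarrow> real) \<Rightarrow>
    (nat \<Rightarrow> 's \<Rightarrow> 'ob \<Rightarrow> 'a \<Rightarrow> real) \<Rightarrow> (nat \<Rightarrow> 's \<Rightarrow> 'a \<Rightarrow> 's \<Rightarrow> real) \<Rightarrow>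
    (nat \<Rightarrow> 'ob \<Rightarrow> 'a \<Rightarrow> real) \<Rightarrow> bool" where
  "Q_base T S Ob A p0 pt tsoa tsas dl \<longleftrightarrow>
     (\<forall>t\<in>{1..T}.
        (\<forall>s\<in>S. \<forall>ob\<in>Ob. \<forall>a\<in>A. tsoa t s ob a \<ge> 0) \<and>
        (\<forall>s\<in>S. \<forall>a\<in>A. \<forall>s'\<in>S. tsas t s a s' \<ge> 0) \<and>
        (\<forall>ob\<in>Ob. (\<forall>a\<in>A. dl t ob a \<ge> 0) \<and> (\<Sum>a\<in>A. dl t ob a) = 1) \<and>
        (\<forall>s\<in>S. (\<Sum>ob\<in>Ob. \<Sum>a\<in>A. tsoa t s ob a) = nu S A p0 tsas t s) \<and>
        (\<forall>s\<in>S. \<forall>a\<in>A. (\<Sum>sb\<in>S. tsas t s a sb) = (\<Sum>ob\<in>Ob. tsoa t s ob a)) \<and>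
        (\<forall>s\<in>S. \<forall>a\<in>A. \<forall>s'\<in>S. tsas t s a s' = pt s a s' * (\<Sum>sb\<in>S. tsas t s a sb)))"

definition inQ where
  "inQ T S Ob A p0 pe pt tsoa tsas dl \<longleftrightarrow>
     Q_base T S Ob A p0 pt tsoa tsas dl \<and>
     (\<forall>t\<in>{1..T}. \<forall>s\<in>S. \<forall>ob\<in>Ob. \<forall>a\<in>A.
        tsoa t s ob a = dl t ob a * pe s ob * (\<Sum>ob'\<in>Ob. \<Sum>a'\<in>A. tsoa t s ob' a'))"

text \<open>McCormick constraints replacing (v).\<close>
definition mccormick where
  "mccormick T S Ob A p0 pe tsoa tsas dl \<longleftrightarrow>
     (\<forall>t\<in>{1..T}. \<forall>s\<in>S. \<forall>ob\<in>Ob. \<forall>a\<in>A.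
        tsoa t s ob a \<le> pe s ob * nu S A p0 tsas t s \<and>
        tsoa t s ob a \<le> dl t ob a \<and>
        tsoa t s ob a \<ge> pe s ob * nu S A p0 tsas t s + dl t ob a - 1)"

definition inQd where
  "inQd T S Ob A p0 pe pt tsoa tsas dl \<longleftrightarrow>
     Q_base T S Ob A p0 pt tsoa tsas dl \<and>
     (\<forall>t\<in>{1..T}. \<forall>ob\<in>Ob. \<forall>a\<in>A. dl t ob a = 0 \<or> dl t ob a = 1) \<and>
     mccormick T S Ob A p0 pe tsoa tsas dl"

definition inQd_relax where
  "inQd_relax T S Ob A p0 pe pt tsoa tsas dl \<longleftrightarrow>
     Q_base T S Ob A p0 pt tsoa tsas dl \<and>
     (\<forall>t\<in>{1..T}. \<forall>ob\<in>Ob. \<forall>a\<in>A. 0 \<le> dl t ob a \<and> dl t ob a \<le> 1) \<and>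
     mccormick T S Ob A p0 pe tsoa tsas dl"

text \<open>p(s|s',a',ob); division by zero yields 0 in HOL (then all weights
  p(ob|s)p(s|s',a') vanish as well).\<close>
definition pcond where
  "pcond S pe pt s' a' ob s =
     pe s ob * pt s' a' s / (\<Sum>sb\<in>S. pe sb ob * pt s' a' sb)"

text \<open>Valid inequalities of R^c for one component; x t s' a' s ob a = tau^t_{s'a'soa}.\<close>
definition cuts where
  "cuts T S Ob A pe pt tsoa tsas x \<longleftrightarrow>
     (\<forall>t\<in>{2..T}.
        (\<forall>s'\<in>S. \<forall>a'\<in>A. \<forall>s\<in>S. \<forall>ob\<in>Ob. \<forall>a\<in>A. x t s' a' s ob a \<ge> 0) \<and>
        (\<forall>s\<in>S. \<forall>ob\<in>Ob. \<forall>a\<in>A. (\<Sum>s'\<in>S. \<Sum>a'\<in>A. x t s' a' s ob a) = tsoa t s ob a) \<and>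
        (\<forall>s'\<in>S. \<forall>a'\<in>A. \<forall>s\<in>S. \<forall>ob\<in>Ob.
           (\<Sum>a\<in>A. x t s' a' s ob a) = pe s ob * pt s' a' s * (\<Sum>sb\<in>S. tsas (t - 1) s' a' sb)) \<and>
        (\<forall>s'\<in>S. \<forall>a'\<in>A. \<forall>s\<in>S. \<forall>ob\<in>Ob. \<forall>a\<in>A.
           x t s' a' s ob a = pcond S pe pt s' a' ob s * (\<Sum>sb\<in>S. x t s' a' sb ob a)))"

text \<open>Components indexed by m in {1..M}; all component-indexed data are functions of m.
  Resource vectors in R^q are functions 'k \<Rightarrow> real with 'k a finite index type.\<close>

definition weakly_coupled_pomdp where
  "weakly_coupled_pomdp M S Ob A p0 pe pt (D :: nat \<Rightarrow> 'a \<Rightarrow> 'k::finite \<Rightarrow> real) b \<longleftrightarrow>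
     (\<forall>m\<in>{1..M}. pomdp (S m) (Ob m) (A m) (p0 m) (pe m) (pt m)) \<and>
     (\<forall>k. b k \<ge> 0) \<and>
     (\<exists>act. (\<forall>m\<in>{1..M}. act m \<in> A m) \<and>
            (\<forall>k. (\<Sum>m\<in>{1..M}. D m (act m) k) \<le> b k))"

definition objective where
  "objective T M S A r tsas =
     (\<Sum>t\<in>{1..T}. \<Sum>m\<in>{1..M}. \<Sum>s\<in>S m. \<Sum>a\<in>A m. \<Sum>s'\<in>S m.
        r m s a s' * tsas m t s a s')"

definition tau_a where
  "tau_a S Ob tsoa m t a = (\<Sum>s\<in>S m. \<Sum>ob\<in>Ob m. tsoa m t s ob a)"

definition usage where
  "usage M S Ob A D tsoa t k = (\<Sum>m\<in>{1..M}. \<Sum>a\<in>A m. D m a k * tau_a S Ob tsoa m t a)"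

definition linking where
  "linking T M S Ob A D b tsoa \<longleftrightarrow>
     (\<forall>t\<in>{1..T}. \<forall>k. usage M S Ob A D tsoa t k \<le> b k)"

definition lagr_objective where
  "lagr_objective T M S Ob A r (D :: nat \<Rightarrow> 'a \<Rightarrow> 'k::finite \<Rightarrow> real) b \<beta> tsoa tsas =
     objective T M S A r tsas +
     (\<Sum>t\<in>{1..T}. \<Sum>k\<in>UNIV. \<beta> t k * (b k - usage M S Ob A D tsoa t k))"

definition z_UB where
  "z_UB T M S Ob A p0 pe pt r D b =
     Sup {objective T M S A r tsas | tsoa tsas dl.
          (\<forall>m\<in>{1..M}. inQ T (S m) (Ob m) (A m) (p0 m) (pe m) (pt m) (tsoa m) (tsas m) (dl m)) \<and>
          linking T M S Ob A D b tsoa}"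

definition z_R where
  "z_R T M S Ob A p0 pe pt r D b =
     Sup {objective T M S A r tsas | tsoa tsas dl.
          (\<forall>m\<in>{1..M}. inQd_relax T (S m) (Ob m) (A m) (p0 m) (pe m) (pt m) (tsoa m) (tsas m) (dl m)) \<and>
          linking T M S Ob A D b tsoa}"

definition z_Rc where
  "z_Rc T M S Ob A p0 pe pt r D b =
     Sup {objective T M S A r tsas | tsoa tsas dl x.
          (\<forall>m\<in>{1..M}. inQd_relax T (S m) (Ob m) (A m) (p0 m) (pe m) (pt m) (tsoa m) (tsas m) (dl m) \<and>
              cuts T (S m) (Ob m) (A m) (pe m) (pt m) (tsoa m) (tsas m) (x m)) \<and>
          linking T M S Ob A D b tsoa}"

definition z_LR_IP where
  "z_LR_IP T M S Ob A p0 pe pt r D b =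
     Inf ((\<lambda>\<beta>. Sup {lagr_objective T M S Ob A r D b \<beta> tsoa tsas | tsoa tsas dl.
          (\<forall>m\<in>{1..M}. inQd T (S m) (Ob m) (A m) (p0 m) (pe m) (pt m) (tsoa m) (tsas m) (dl m))})
        ` {\<beta>. \<forall>t\<in>{1..T}. \<forall>k. \<beta> t k \<ge> 0})"

definition z_LR_UB where
  "z_LR_UB T M S Ob A p0 pe pt r D b =
     Inf ((\<lambda>\<beta>. Sup {lagr_objective T M S Ob A r D b \<beta> tsoa tsas | tsoa tsas dl.
          (\<forall>m\<in>{1..M}. inQ T (S m) (Ob m) (A m) (p0 m) (pe m) (pt m) (tsoa m) (tsas m) (dl m))})
        ` {\<beta>. \<forall>t\<in>{1..T}. \<forall>k. \<beta> t k \<ge> 0})"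

end

theory Submission
  imports Defs "HOL-Library.Nat_Bijection" "HOL-Library.FuncSet"
begin

(* For fixed multipliers beta >= 0 the Lagrangian separates into one POMDP per component whose
   rewards are penalised by the resource usage. The value of such a POMDP is affine in each
   decision rule delta^t(.|o) separately, so a deterministic memoryless policy is optimal; hence
   the maxima of the Lagrangian over Q and over Q^d both equal the largest of the finitely many
   values G(beta) of deterministic joint policies, and weak duality gives z_UB <= min G.
   Each of these values is affine in beta, so by linear programming duality (Farkas' lemma,
   proved by Fourier-Motzkin elimination) min G is at most the value of some convex combination
   of deterministic policies that meets the linking constraints on average. The mixed occupation
   measures, together with the mixed pair variables tau^t_{s'a'soa} of the policies, satisfy all
   constraints of R^c, which gives z_LR <= z_Rc; and R^c only adds constraints to R. *)

lemma sum_mult_sum_commute: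
  fixes w :: "'a \<Rightarrow> 'c::comm_semiring_0"
  shows "(\<Sum>x\<in>X. w x * (\<Sum>y\<in>Y. f x y)) = (\<Sum>y\<in>Y. \<Sum>x\<in>X. w x * f x y)"
  by (subst sum.swap) (simp add: sum_distrib_left)

lemma convex_comb_le_member:
  fixes w f :: "'a \<Rightarrow> real"
  assumes "finite A" "A \<noteq> {}" "\<forall>a\<in>A. 0 \<le> w a" "(\<Sum>a\<in>A. w a) = 1"
  shows "\<exists>a0\<in>A. (\<Sum>a\<in>A. w a * f a) \<le> f a0"
proof -
  have "Max (f ` A) \<in> f ` A"
    using assms(1,2) by simp
  then obtain a0 where "a0 \<in> A" "f a0 = Max (f ` A)"
    by auto
  moreover have "(\<Sum>a\<in>A. w a * f a) \<le> (\<Sum>a\<in>A. w a * Max (f ` A))"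
    using assms(1,3) by (intro sum_mono mult_left_mono) auto
  moreover have "(\<Sum>a\<in>A. w a * Max (f ` A)) = Max (f ` A)"
    using assms(4) by (simp add: sum_distrib_right [symmetric])
  ultimately show ?thesis
    by (metis order.refl)
qed

section \<open>Farkas' lemma and Lagrangian duality\<close>

definition pair_code :: "nat \<Rightarrow> nat \<Rightarrow> nat" where
  "pair_code p q = 2 * prod_encode (p, q) + 1"

lemma pair_code_eq_iff [simp]: "pair_code p q = pair_code p' q' \<longleftrightarrow> p = p' \<and> q = q'"
  by (auto simp: pair_code_def)

lemma pair_code_odd [simp]: "pair_code p q \<noteq> 2 * i"
  unfolding pair_code_def by presburger

text \<open>Fourier--Motzkin elimination of the variable with coefficients \<open>a\<close>: the rows with \<open>a i = 0\<close>
  are kept at the even indices, and each pair of a row with positive and a row with negative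
  coefficient is combined into one row at an odd index.\<close>

definition fm_index :: "(nat \<Rightarrow> real) \<Rightarrow> nat set \<Rightarrow> nat set" where
  "fm_index a I = (\<lambda>i. 2 * i) ` {i\<in>I. a i = 0} \<union>
     (\<lambda>(p, q). pair_code p q) ` ({i\<in>I. 0 < a i} \<times> {i\<in>I. a i < 0})"

definition fm_row :: "(nat \<Rightarrow> real) \<Rightarrow> (nat \<Rightarrow> real) \<Rightarrow> nat \<Rightarrow> real" where
  "fm_row a h i' = (if even i' then h (i' div 2)
     else (case prod_decode (i' div 2) of (p, q) \<Rightarrow> - a q * h p + a p * h q))"

lemma fm_row_even [simp]: "fm_row a h (2 * i) = h i"
  by (simp add: fm_row_def)

lemma fm_row_pair_code [simp]: "fm_row a h (pair_code p q) = - a q * h p + a p * h q"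
  by (simp add: fm_row_def pair_code_def)

lemma finite_fm_index: "finite I \<Longrightarrow> finite (fm_index a I)"
  by (simp add: fm_index_def)

lemma fm_row_eliminates: "i' \<in> fm_index a I \<Longrightarrow> fm_row a a i' = 0"
  by (auto simp: fm_index_def)

lemma fm_row_linear:
  "fm_row a (\<lambda>i. \<Sum>j\<in>J. A i j * x j) i' = (\<Sum>j\<in>J. fm_row a (\<lambda>i. A i j) i' * x j)"
  by (cases "prod_decode (i' div 2)")
    (simp add: fm_row_def sum_distrib_left sum_distrib_right sum.distrib mult.assoc
      left_diff_distrib sum_subtractf sum_negf)

definition fm_multiplier :: "(nat \<Rightarrow> real) \<Rightarrow> nat set \<Rightarrow> (nat \<Rightarrow> real) \<Rightarrow> nat \<Rightarrow> real" where
  "fm_multiplier a I y' i =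
     (if a i = 0 then y' (2 * i)
      else if 0 < a i then (\<Sum>q\<in>{q\<in>I. a q < 0}. y' (pair_code i q) * - a q)
      else (\<Sum>p\<in>{p\<in>I. 0 < a p}. y' (pair_code p i) * a p))"

lemma fm_multiplier_nonneg:
  assumes y': "\<forall>i'\<in>fm_index a I. 0 \<le> y' i'" and "i \<in> I"
  shows "0 \<le> fm_multiplier a I y' i"
proof -
  have "0 \<le> y' (2 * i)" if "a i = 0"
    using y' that \<open>i \<in> I\<close> by (simp add: fm_index_def)
  moreover have "0 \<le> y' (pair_code p q)" if "p \<in> I" "0 < a p" "q \<in> I" "a q < 0" for p q
    using y' that by (simp add: fm_index_def image_iff)
  ultimately show ?thesis
    using \<open>i \<in> I\<close> by (auto simp: fm_multiplier_def intro!: sum_nonneg mult_nonneg_nonpos)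
qed

lemma fm_multiplier_sum:
  assumes "finite I"
  shows "(\<Sum>i\<in>I. fm_multiplier a I y' i * h i) = (\<Sum>i'\<in>fm_index a I. y' i' * fm_row a h i')"
proof -
  define I0 Ip In where "I0 = {i\<in>I. a i = 0}" and "Ip = {i\<in>I. 0 < a i}" and "In = {i\<in>I. a i < 0}"
  have fin: "finite I0" "finite Ip" "finite In"
    using assms by (auto simp: I0_def Ip_def In_def)
  have "I = I0 \<union> Ip \<union> In" "I0 \<inter> Ip = {}" "(I0 \<union> Ip) \<inter> In = {}"
    by (auto simp: I0_def Ip_def In_def)
  then have "(\<Sum>i\<in>I. fm_multiplier a I y' i * h i) =
      (\<Sum>i\<in>I0. fm_multiplier a I y' i * h i) + (\<Sum>i\<in>Ip. fm_multiplier a I y' i * h i)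
      + (\<Sum>i\<in>In. fm_multiplier a I y' i * h i)"
    using fin by (simp add: sum.union_disjoint)
  also have "\<dots> = (\<Sum>i\<in>I0. y' (2 * i) * h i)
      + (\<Sum>p\<in>Ip. \<Sum>q\<in>In. y' (pair_code p q) * (- a q * h p))
      + (\<Sum>q\<in>In. \<Sum>p\<in>Ip. y' (pair_code p q) * (a p * h q))"
    by (simp add: I0_def Ip_def In_def fm_multiplier_def sum_distrib_right mult.assoc)
  also have "\<dots> = (\<Sum>i\<in>I0. y' (2 * i) * h i)
      + (\<Sum>(p, q)\<in>Ip \<times> In. y' (pair_code p q) * (- a q * h p + a p * h q))"
  proof -
    have "(\<Sum>(p, q)\<in>Ip \<times> In. y' (pair_code p q) * (- a q * h p + a p * h q))
        = (\<Sum>p\<in>Ip. \<Sum>q\<in>In. y' (pair_code p q) * (- a q * h p))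
          + (\<Sum>p\<in>Ip. \<Sum>q\<in>In. y' (pair_code p q) * (a p * h q))"
      unfolding sum.cartesian_product [symmetric] by (simp only: prod.case distrib_left sum.distrib)
    also have "(\<Sum>p\<in>Ip. \<Sum>q\<in>In. y' (pair_code p q) * (a p * h q))
        = (\<Sum>q\<in>In. \<Sum>p\<in>Ip. y' (pair_code p q) * (a p * h q))"
      by (rule sum.swap)
    finally show ?thesis
      by simp
  qed
  also have "\<dots> = (\<Sum>i'\<in>fm_index a I. y' i' * fm_row a h i')"
  proof -
    have "inj_on (\<lambda>(p, q). pair_code p q) (Ip \<times> In)"
      by (auto simp: inj_on_def)
    moreover have "(\<lambda>i. 2 * i) ` I0 \<inter> (\<lambda>(p, q). pair_code p q) ` (Ip \<times> In) = {}"
      by (auto simp: eq_commute)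
    ultimately show ?thesis
      using fin by (simp add: fm_index_def I0_def [symmetric] Ip_def [symmetric] In_def [symmetric]
          sum.union_disjoint sum.reindex inj_on_def split_def)
  qed
  finally show ?thesis .
qed

text \<open>The elimination is exact: a solution of the eliminated system extends to the eliminated
  variable, whose value is squeezed between the bounds imposed by the rows with positive and
  with negative coefficient.\<close>

lemma exists_between:
  fixes l u :: "'a \<Rightarrow> real"
  assumes "finite L" "finite U" "\<forall>p\<in>L. \<forall>q\<in>U. l p \<le> u q"
  shows "\<exists>z. (\<forall>p\<in>L. l p \<le> z) \<and> (\<forall>q\<in>U. z \<le> u q)"
proof (cases "L = {}")
  case True
  then show ?thesis
    using assms(2) by (intro exI[of _ "if U = {} then 0 else Min (u ` U)"]) auto
next
  case False
  then show ?thesis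
    using assms by (intro exI[of _ "Max (l ` L)"]) auto
qed

lemma fm_solution_extends:
  fixes A :: "nat \<Rightarrow> 'j \<Rightarrow> real"
  assumes "finite I" "finite J" "j0 \<notin> J"
    and sol: "\<forall>i'\<in>fm_index (\<lambda>i. A i j0) I.
                (\<Sum>j\<in>J. fm_row (\<lambda>i. A i j0) (\<lambda>i. A i j) i' * x j) \<le> fm_row (\<lambda>i. A i j0) c i'"
  shows "\<exists>x'. \<forall>i\<in>I. (\<Sum>j\<in>insert j0 J. A i j * x' j) \<le> c i"
proof -
  define a where "a = (\<lambda>i. A i j0)"
  define s where "s = (\<lambda>i. \<Sum>j\<in>J. A i j * x j)"
  define bound where "bound i = (c i - s i) / a i" for i
  define Ip In where "Ip = {i\<in>I. 0 < a i}" and "In = {i\<in>I. a i < 0}"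
  have sol_row: "fm_row a s i' \<le> fm_row a c i'" if "i' \<in> fm_index a I" for i'
    using sol that by (simp add: a_def s_def fm_row_linear)
  have zero_rows: "s i \<le> c i" if "i \<in> I" "a i = 0" for i
    using sol_row[of "2 * i"] that by (auto simp: fm_index_def)
  have bounds: "bound q \<le> bound p" if "p \<in> Ip" "q \<in> In" for p q
  proof -
    have "pair_code p q \<in> fm_index a I"
      using that by (force simp: fm_index_def Ip_def In_def)
    then have "- a q * s p + a p * s q \<le> - a q * c p + a p * c q"
      using sol_row by fastforce
    then show ?thesis
      using that by (simp add: bound_def Ip_def In_def field_simps)
  qed
  have "finite Ip" "finite In"
    using assms(1) by (auto simp: Ip_def In_def)
  then obtain z where z_lower: "\<forall>q\<in>In. bound q \<le> z" and z_upper: "\<forall>p\<in>Ip. z \<le> bound p"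
    using exists_between[of In Ip bound bound] bounds by blast
  have "(\<Sum>j\<in>insert j0 J. A i j * (x(j0 := z)) j) \<le> c i" if "i \<in> I" for i
  proof -
    have "(\<Sum>j\<in>J. A i j * (x(j0 := z)) j) = s i"
      unfolding s_def using assms(3) by (intro sum.cong) auto
    then have "(\<Sum>j\<in>insert j0 J. A i j * (x(j0 := z)) j) = a i * z + s i"
      using assms(2,3) by (simp add: a_def)
    moreover have "a i * z \<le> c i - s i"
    proof (cases "a i" "0 :: real" rule: linorder_cases)
      case less
      then show ?thesis
        using z_lower that by (simp add: In_def bound_def divide_le_eq mult.commute)
    next
      case equal
      then show ?thesis
        using zero_rows that by simp
    next
      case greater
      then show ?thesis
        using z_upper that by (simp add: Ip_def bound_def le_divide_eq mult.commute)
    qed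
    ultimately show ?thesis
      by simp
  qed
  then show ?thesis
    by blast
qed

lemma fm_multiplier_certificate:
  fixes A :: "nat \<Rightarrow> 'j \<Rightarrow> real" and j0 :: 'j
  defines "a \<equiv> \<lambda>i. A i j0"
  assumes "finite I"
    and y': "\<forall>i'\<in>fm_index a I. 0 \<le> y' i'"
      "\<forall>j\<in>J. (\<Sum>i'\<in>fm_index a I. y' i' * fm_row a (\<lambda>i. A i j) i') = 0"
      "(\<Sum>i'\<in>fm_index a I. y' i' * fm_row a c i') < 0"
  shows "\<exists>y. (\<forall>i\<in>I. 0 \<le> y i) \<and> (\<forall>j\<in>insert j0 J. (\<Sum>i\<in>I. y i * A i j) = 0) \<and> (\<Sum>i\<in>I. y i * c i) < 0"
proof (intro exI conjI ballI)
  note pull_back = fm_multiplier_sum[OF \<open>finite I\<close>, of a y']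
  show "0 \<le> fm_multiplier a I y' i" if "i \<in> I" for i
    using fm_multiplier_nonneg[OF y'(1) that] .
  show "(\<Sum>i\<in>I. fm_multiplier a I y' i * c i) < 0"
    using y'(3) by (simp add: pull_back)
  show "(\<Sum>i\<in>I. fm_multiplier a I y' i * A i j) = 0" if "j \<in> insert j0 J" for j
  proof (cases "j = j0")
    case True
    have "(\<Sum>i\<in>I. fm_multiplier a I y' i * a i) = 0"
      by (simp add: pull_back fm_row_eliminates)
    with True show ?thesis
      by (simp add: a_def)
  next
    case False
    then show ?thesis
      using that y'(2) pull_back[of "\<lambda>i. A i j"] by simp
  qed
qed

lemma farkas_lemma_nat:
  fixes A :: "nat \<Rightarrow> 'j \<Rightarrow> real"
  assumes "finite J" "finite I" "\<nexists>x. \<forall>i\<in>I. (\<Sum>j\<in>J. A i j * x j) \<le> c i"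
  shows "\<exists>y. (\<forall>i\<in>I. 0 \<le> y i) \<and> (\<forall>j\<in>J. (\<Sum>i\<in>I. y i * A i j) = 0) \<and> (\<Sum>i\<in>I. y i * c i) < 0"
  using assms
proof (induction J arbitrary: I A c rule: finite_induct)
  case empty
  then obtain i where i: "i \<in> I" "c i < 0"
    by (auto simp: not_le)
  have "(\<Sum>k\<in>I. (if k = i then 1 else 0) * c k) = (\<Sum>k\<in>I. if k = i then c k else 0)"
    by (intro sum.cong) auto
  with i empty.prems(1) show ?case
    by (intro exI[of _ "\<lambda>k. if k = i then 1 else 0"]) simp
next
  case (insert j0 J)
  define a where "a = (\<lambda>i. A i j0)"
  have "\<nexists>x. \<forall>i'\<in>fm_index a I. (\<Sum>j\<in>J. fm_row a (\<lambda>i. A i j) i' * x j) \<le> fm_row a c i'"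
  proof
    assume "\<exists>x. \<forall>i'\<in>fm_index a I. (\<Sum>j\<in>J. fm_row a (\<lambda>i. A i j) i' * x j) \<le> fm_row a c i'"
    then obtain x where "\<forall>i'\<in>fm_index a I. (\<Sum>j\<in>J. fm_row a (\<lambda>i. A i j) i' * x j) \<le> fm_row a c i'"
      by blast
    then have "\<exists>x'. \<forall>i\<in>I. (\<Sum>j\<in>insert j0 J. A i j * x' j) \<le> c i"
      unfolding a_def by (rule fm_solution_extends[OF insert.prems(1) insert.hyps(1,2)])
    with insert.prems(2) show False
      by blast
  qed
  from insert.IH[where I = "fm_index a I" and A = "\<lambda>i' j. fm_row a (\<lambda>i. A i j) i'"
      and c = "fm_row a c", OF finite_fm_index[OF insert.prems(1)] this] obtain y' where
    y': "\<forall>i'\<in>fm_index a I. 0 \<le> y' i'"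
        "\<forall>j\<in>J. (\<Sum>i'\<in>fm_index a I. y' i' * fm_row a (\<lambda>i. A i j) i') = 0"
        "(\<Sum>i'\<in>fm_index a I. y' i' * fm_row a c i') < 0"
    by blast
  show ?case
    using fm_multiplier_certificate[OF insert.prems(1) y'[unfolded a_def]] .
qed

theorem farkas_lemma:
  fixes A :: "'i \<Rightarrow> 'j \<Rightarrow> real"
  assumes "finite I" "finite J" "\<nexists>x. \<forall>i\<in>I. (\<Sum>j\<in>J. A i j * x j) \<le> c i"
  shows "\<exists>y. (\<forall>i\<in>I. 0 \<le> y i) \<and> (\<forall>j\<in>J. (\<Sum>i\<in>I. y i * A i j) = 0) \<and> (\<Sum>i\<in>I. y i * c i) < 0"
proof -
  obtain f :: "'i \<Rightarrow> nat" where f: "inj_on f I"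
    using finite_imp_inj_to_nat_seg[OF assms(1)] by blast
  define g where "g = inv_into I f"
  have g: "g (f i) = i" if "i \<in> I" for i
    using f that by (simp add: g_def)
  have "\<nexists>x. \<forall>k\<in>f ` I. (\<Sum>j\<in>J. A (g k) j * x j) \<le> c (g k)"
  proof
    assume "\<exists>x. \<forall>k\<in>f ` I. (\<Sum>j\<in>J. A (g k) j * x j) \<le> c (g k)"
    then have "\<exists>x. \<forall>i\<in>I. (\<Sum>j\<in>J. A i j * x j) \<le> c i"
      using g by auto
    with assms(3) show False ..
  qed
  then obtain y where y: "\<forall>k\<in>f ` I. 0 \<le> y k" "\<forall>j\<in>J. (\<Sum>k\<in>f ` I. y k * A (g k) j) = 0"
      "(\<Sum>k\<in>f ` I. y k * c (g k)) < 0"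
    using farkas_lemma_nat[where A = "\<lambda>k. A (g k)" and c = "\<lambda>k. c (g k)",
        OF assms(2) finite_imageI[OF assms(1)]] by blast
  have reindex: "(\<Sum>k\<in>f ` I. y k * h (g k)) = (\<Sum>i\<in>I. y (f i) * h i)" for h :: "'i \<Rightarrow> real"
    using f g by (simp add: sum.reindex)
  show ?thesis
  proof (intro exI[of _ "y \<circ> f"] conjI ballI)
    show "(\<Sum>i\<in>I. (y \<circ> f) i * A i j) = 0" if "j \<in> J" for j
      using y(2) that reindex[of "\<lambda>i. A i j"] by simp
  qed (use y reindex[of c] in auto)
qed

corollary farkas_lemma_nonneg:
  fixes A :: "'i \<Rightarrow> 'j \<Rightarrow> real"
  assumes "finite I" "finite J" "\<nexists>x. (\<forall>j\<in>J. 0 \<le> x j) \<and> (\<forall>i\<in>I. (\<Sum>j\<in>J. A i j * x j) \<le> c i)"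
  shows "\<exists>y. (\<forall>i\<in>I. 0 \<le> y i) \<and> (\<forall>j\<in>J. 0 \<le> (\<Sum>i\<in>I. y i * A i j)) \<and> (\<Sum>i\<in>I. y i * c i) < 0"
proof -
  define A' where "A' = case_sum A (\<lambda>j' j. if j = j' then - 1 else (0 :: real))"
  define c' where "c' = case_sum c (\<lambda>_ :: 'j. 0 :: real)"
  have sum_Plus: "(\<Sum>i\<in>I <+> J. f i) = (\<Sum>i\<in>I. f (Inl i)) + (\<Sum>j\<in>J. f (Inr j))" for f :: "'i + 'j \<Rightarrow> real"
    using assms(1,2) by (simp add: sum.Plus)
  have sign: "(\<Sum>j'\<in>J. (if j = j' then - 1 else 0) * x j') = - x j"
    "(\<Sum>j'\<in>J. (if j' = j then - 1 else 0) * x j') = - x j" if "j \<in> J" for x :: "'j \<Rightarrow> real" and j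
    using that assms(2) by (simp_all add: if_distrib [of "\<lambda>u. u * _"] cong: if_cong)
  have "\<nexists>x. \<forall>i\<in>I <+> J. (\<Sum>j\<in>J. A' i j * x j) \<le> c' i"
  proof
    assume "\<exists>x. \<forall>i\<in>I <+> J. (\<Sum>j\<in>J. A' i j * x j) \<le> c' i"
    then obtain x where x: "\<forall>i\<in>I <+> J. (\<Sum>j\<in>J. A' i j * x j) \<le> c' i"
      by blast
    have "0 \<le> x j" if "j \<in> J" for j
      using x[rule_format, OF InrI[OF that]] sign[OF that, of x] by (simp add: A'_def c'_def)
    moreover have "(\<Sum>j\<in>J. A i j * x j) \<le> c i" if "i \<in> I" for i
      using x[rule_format, OF InlI[OF that]] by (simp add: A'_def c'_def)
    ultimately show False
      using assms(3) by blast
  qed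
  then obtain y where y: "\<forall>i\<in>I <+> J. 0 \<le> y i" "\<forall>j\<in>J. (\<Sum>i\<in>I <+> J. y i * A' i j) = 0"
    "(\<Sum>i\<in>I <+> J. y i * c' i) < 0"
    using farkas_lemma[OF finite_Plus[OF assms(1,2)] assms(2)] by blast
  have "(\<Sum>i\<in>I. y (Inl i) * A i j) = y (Inr j)" if "j \<in> J" for j
    using y(2) that by (simp add: sum_Plus A'_def mult.commute[of "y _"] sign)
  then show ?thesis
    using y(1,3) by (intro exI[of _ "y \<circ> Inl"]) (auto simp: sum_Plus c'_def)
qed

theorem lagrangian_duality:
  fixes c :: "'p \<Rightarrow> real" and g :: "'p \<Rightarrow> 'j \<Rightarrow> real"
  assumes "finite P" "finite J"
    and mixtures: "\<And>w. \<forall>p\<in>P. 0 \<le> w p \<Longrightarrow> (\<Sum>p\<in>P. w p) = 1 \<Longrightarrow>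
      \<forall>j\<in>J. 0 \<le> (\<Sum>p\<in>P. w p * g p j) \<Longrightarrow> (\<Sum>p\<in>P. w p * c p) \<le> v"
  shows "\<exists>\<beta>. (\<forall>j\<in>J. 0 \<le> \<beta> j) \<and> (\<forall>p\<in>P. c p + (\<Sum>j\<in>J. g p j * \<beta> j) \<le> v)"
proof (rule ccontr)
  assume "\<nexists>\<beta>. (\<forall>j\<in>J. 0 \<le> \<beta> j) \<and> (\<forall>p\<in>P. c p + (\<Sum>j\<in>J. g p j * \<beta> j) \<le> v)"
  then have "\<nexists>\<beta>. (\<forall>j\<in>J. 0 \<le> \<beta> j) \<and> (\<forall>p\<in>P. (\<Sum>j\<in>J. g p j * \<beta> j) \<le> v - c p)"
    by (simp add: algebra_simps)
  then obtain y where y: "\<forall>p\<in>P. 0 \<le> y p" "\<forall>j\<in>J. 0 \<le> (\<Sum>p\<in>P. y p * g p j)"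
    "(\<Sum>p\<in>P. y p * (v - c p)) < 0"
    using farkas_lemma_nonneg[OF assms(1,2), where A = g and c = "\<lambda>p. v - c p"] by blast
  define Y where "Y = (\<Sum>p\<in>P. y p)"
  have "Y \<noteq> 0"
  proof
    assume "Y = 0"
    then have "\<forall>p\<in>P. y p = 0"
      using y(1) assms(1) by (simp add: Y_def sum_nonneg_eq_0_iff)
    then show False
      using y(3) by simp
  qed
  then have "0 < Y"
    using y(1) by (simp add: Y_def order.not_eq_order_implies_strict sum_nonneg)
  have "(\<Sum>p\<in>P. y p / Y * c p) \<le> v"
  proof (rule mixtures)
    show "\<forall>j\<in>J. 0 \<le> (\<Sum>p\<in>P. y p / Y * g p j)"
      using y(2) \<open>0 < Y\<close> by (simp add: sum_divide_distrib [symmetric])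
  qed (use y(1) \<open>0 < Y\<close> in \<open>simp_all add: Y_def sum_divide_distrib [symmetric]\<close>)
  then have "(\<Sum>p\<in>P. y p * c p) \<le> Y * v"
    using \<open>0 < Y\<close> by (simp add: sum_divide_distrib [symmetric] divide_le_eq mult.commute)
  moreover have "(\<Sum>p\<in>P. y p * (v - c p)) = Y * v - (\<Sum>p\<in>P. y p * c p)"
    by (simp add: Y_def right_diff_distrib sum_subtractf sum_distrib_right)
  ultimately show False
    using y(3) by simp
qed

section \<open>Policies and occupation measures of a single POMDP\<close>

locale pomdp_component =
  fixes S :: "'s set" and Ob :: "'ob set" and A :: "'a set"
    and p0 :: "'s \<Rightarrow> real" and pe :: "'s \<Rightarrow> 'ob \<Rightarrow> real" and pt :: "'s \<Rightarrow> 'a \<Rightarrow> 's \<Rightarrow> real"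
  assumes pomdp: "pomdp S Ob A p0 pe pt"
begin

lemma finite_S: "finite S" and finite_Ob: "finite Ob" and finite_A: "finite A"
  and A_nonempty: "A \<noteq> {}"
  using pomdp by (auto simp: pomdp_def)

lemma p0_nonneg: "s \<in> S \<Longrightarrow> 0 \<le> p0 s"
  and sum_p0: "(\<Sum>s\<in>S. p0 s) = 1"
  and pe_nonneg: "s \<in> S \<Longrightarrow> ob \<in> Ob \<Longrightarrow> 0 \<le> pe s ob"
  and sum_pe: "s \<in> S \<Longrightarrow> (\<Sum>ob\<in>Ob. pe s ob) = 1"
  and pt_nonneg: "s \<in> S \<Longrightarrow> a \<in> A \<Longrightarrow> s' \<in> S \<Longrightarrow> 0 \<le> pt s a s'"
  and sum_pt: "s \<in> S \<Longrightarrow> a \<in> A \<Longrightarrow> (\<Sum>s'\<in>S. pt s a s') = 1"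
  using pomdp by (auto simp: pomdp_def)

lemma pe_le_1: "s \<in> S \<Longrightarrow> ob \<in> Ob \<Longrightarrow> pe s ob \<le> 1"
  using member_le_sum[of ob Ob "pe s"] pe_nonneg sum_pe finite_Ob by fastforce

definition stoch_policy :: "nat \<Rightarrow> (nat \<Rightarrow> 'ob \<Rightarrow> 'a \<Rightarrow> real) \<Rightarrow> bool" where
  "stoch_policy T \<delta> \<longleftrightarrow> (\<forall>t\<in>{1..T}. \<forall>ob\<in>Ob. (\<forall>a\<in>A. 0 \<le> \<delta> t ob a) \<and> (\<Sum>a\<in>A. \<delta> t ob a) = 1)"

lemma stoch_policy_le_1:
  assumes "stoch_policy T \<delta>" "t \<in> {1..T}" "ob \<in> Ob" "a \<in> A"
  shows "\<delta> t ob a \<le> 1"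
proof -
  have "\<delta> t ob a \<le> (\<Sum>a\<in>A. \<delta> t ob a)"
    using assms finite_A by (intro member_le_sum) (auto simp: stoch_policy_def)
  with assms show ?thesis
    by (simp add: stoch_policy_def)
qed

text \<open>\<open>state_prob \<delta> n\<close> is the distribution of the state at time \<open>n + 1\<close>.\<close>

primrec state_prob :: "(nat \<Rightarrow> 'ob \<Rightarrow> 'a \<Rightarrow> real) \<Rightarrow> nat \<Rightarrow> 's \<Rightarrow> real" where
  "state_prob \<delta> 0 s = p0 s"
| "state_prob \<delta> (Suc n) s =
     (\<Sum>s'\<in>S. \<Sum>a\<in>A. pt s' a s * (\<Sum>ob\<in>Ob. \<delta> (Suc n) ob a * pe s' ob * state_prob \<delta> n s'))"

definition occ_soa :: "(nat \<Rightarrow> 'ob \<Rightarrow> 'a \<Rightarrow> real) \<Rightarrow> nat \<Rightarrow> 's \<Rightarrow> 'ob \<Rightarrow> 'a \<Rightarrow> real" where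
  "occ_soa \<delta> t s ob a = \<delta> t ob a * pe s ob * state_prob \<delta> (t - 1) s"

definition occ_sas :: "(nat \<Rightarrow> 'ob \<Rightarrow> 'a \<Rightarrow> real) \<Rightarrow> nat \<Rightarrow> 's \<Rightarrow> 'a \<Rightarrow> 's \<Rightarrow> real" where
  "occ_sas \<delta> t s a s' = pt s a s' * (\<Sum>ob\<in>Ob. occ_soa \<delta> t s ob a)"

lemma state_prob_Suc_occ_sas: "state_prob \<delta> (Suc n) s' = (\<Sum>s\<in>S. \<Sum>a\<in>A. occ_sas \<delta> (Suc n) s a s')"
  by (simp add: occ_sas_def occ_soa_def)

lemma nu_occ_sas:
  assumes "1 \<le> t"
  shows "nu S A p0 (occ_sas \<delta>) t s = state_prob \<delta> (t - 1) s"
proof (cases "t = 1")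
  case False
  with assms obtain n where "t = Suc (Suc n)"
    by (metis One_nat_def Suc_le_D le_SucE not_less_eq_eq)
  then show ?thesis
    by (simp add: nu_def state_prob_Suc_occ_sas del: state_prob.simps)
qed (simp add: nu_def)

lemma sum_occ_sas: "s \<in> S \<Longrightarrow> a \<in> A \<Longrightarrow> (\<Sum>s'\<in>S. occ_sas \<delta> t s a s') = (\<Sum>ob\<in>Ob. occ_soa \<delta> t s ob a)"
  by (simp add: occ_sas_def sum_distrib_right [symmetric] sum_pt)

lemma sum_occ_soa:
  assumes "stoch_policy T \<delta>" "t \<in> {1..T}" "s \<in> S"
  shows "(\<Sum>ob\<in>Ob. \<Sum>a\<in>A. occ_soa \<delta> t s ob a) = state_prob \<delta> (t - 1) s"
proof -
  have "(\<Sum>ob\<in>Ob. \<Sum>a\<in>A. occ_soa \<delta> t s ob a) = (\<Sum>ob\<in>Ob. pe s ob * state_prob \<delta> (t - 1) s * (\<Sum>a\<in>A. \<delta> t ob a))"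
    by (simp add: occ_soa_def sum_distrib_left sum_distrib_right mult_ac)
  also have "\<dots> = (\<Sum>ob\<in>Ob. pe s ob) * state_prob \<delta> (t - 1) s"
    using assms by (simp add: stoch_policy_def sum_distrib_right)
  finally show ?thesis
    using sum_pe[OF assms(3)] by simp
qed

lemma state_prob_nonneg: "stoch_policy T \<delta> \<Longrightarrow> n < T \<Longrightarrow> s \<in> S \<Longrightarrow> 0 \<le> state_prob \<delta> n s"
proof (induction n arbitrary: s)
  case (Suc n)
  then show ?case
    using pe_nonneg pt_nonneg by (auto simp: stoch_policy_def intro!: sum_nonneg mult_nonneg_nonneg)
qed (simp add: p0_nonneg)

lemma sum_state_prob: "stoch_policy T \<delta> \<Longrightarrow> n < T \<Longrightarrow> (\<Sum>s\<in>S. state_prob \<delta> n s) = 1"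
proof (induction n)
  case (Suc n)
  have "(\<Sum>s'\<in>S. state_prob \<delta> (Suc n) s') = (\<Sum>s\<in>S. \<Sum>s'\<in>S. \<Sum>a\<in>A. occ_sas \<delta> (Suc n) s a s')"
    unfolding state_prob_Suc_occ_sas by (rule sum.swap)
  also have "\<dots> = (\<Sum>s\<in>S. \<Sum>a\<in>A. \<Sum>s'\<in>S. occ_sas \<delta> (Suc n) s a s')"
    by (intro sum.cong refl sum.swap)
  also have "\<dots> = (\<Sum>s\<in>S. \<Sum>a\<in>A. \<Sum>ob\<in>Ob. occ_soa \<delta> (Suc n) s ob a)"
    by (simp add: sum_occ_sas)
  also have "\<dots> = (\<Sum>s\<in>S. \<Sum>ob\<in>Ob. \<Sum>a\<in>A. occ_soa \<delta> (Suc n) s ob a)"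
    by (intro sum.cong refl sum.swap)
  also have "\<dots> = (\<Sum>s\<in>S. state_prob \<delta> n s)"
    using Suc.prems by (simp add: sum_occ_soa)
  finally show ?case
    using Suc by simp
qed (simp add: sum_p0)

lemma state_prob_le_1: "stoch_policy T \<delta> \<Longrightarrow> n < T \<Longrightarrow> s \<in> S \<Longrightarrow> state_prob \<delta> n s \<le> 1"
  using member_le_sum[of s S "state_prob \<delta> n"] state_prob_nonneg sum_state_prob finite_S
  by fastforce

lemma occ_soa_nonneg:
  "stoch_policy T \<delta> \<Longrightarrow> t \<in> {1..T} \<Longrightarrow> s \<in> S \<Longrightarrow> ob \<in> Ob \<Longrightarrow> a \<in> A \<Longrightarrow> 0 \<le> occ_soa \<delta> t s ob a"
  unfolding occ_soa_def using state_prob_nonneg[of T \<delta> "t - 1" s] pe_nonneg[of s ob]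
  by (auto simp: stoch_policy_def)

lemma occ_sas_nonneg:
  "stoch_policy T \<delta> \<Longrightarrow> t \<in> {1..T} \<Longrightarrow> s \<in> S \<Longrightarrow> a \<in> A \<Longrightarrow> s' \<in> S \<Longrightarrow> 0 \<le> occ_sas \<delta> t s a s'"
  unfolding occ_sas_def using occ_soa_nonneg pt_nonneg by (auto intro!: mult_nonneg_nonneg sum_nonneg)

lemma occ_sas_factor:
  "s \<in> S \<Longrightarrow> a \<in> A \<Longrightarrow> occ_sas \<delta> t s a s' = pt s a s' * (\<Sum>sb\<in>S. occ_sas \<delta> t s a sb)"
  by (simp add: sum_occ_sas) (simp add: occ_sas_def)

lemma Q_base_occ:
  assumes "stoch_policy T \<delta>"
  shows "Q_base T S Ob A p0 pt (occ_soa \<delta>) (occ_sas \<delta>) \<delta>"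
  unfolding Q_base_def
proof (intro ballI conjI)
  fix t assume t: "t \<in> {1..T}"
  show "0 \<le> occ_soa \<delta> t s ob a" if "s \<in> S" "ob \<in> Ob" "a \<in> A" for s ob a
    using occ_soa_nonneg[OF assms t that] .
  show "0 \<le> occ_sas \<delta> t s a s'" if "s \<in> S" "a \<in> A" "s' \<in> S" for s a s'
    using occ_sas_nonneg[OF assms t that] .
  show "0 \<le> \<delta> t ob a" if "ob \<in> Ob" "a \<in> A" for ob a
    using assms t that by (auto simp: stoch_policy_def)
  show "(\<Sum>a\<in>A. \<delta> t ob a) = 1" if "ob \<in> Ob" for ob
    using assms t that by (auto simp: stoch_policy_def)
  show "(\<Sum>ob\<in>Ob. \<Sum>a\<in>A. occ_soa \<delta> t s ob a) = nu S A p0 (occ_sas \<delta>) t s" if "s \<in> S" for s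
    using sum_occ_soa[OF assms t that] nu_occ_sas t by simp
  show "(\<Sum>sb\<in>S. occ_sas \<delta> t s a sb) = (\<Sum>ob\<in>Ob. occ_soa \<delta> t s ob a)" if "s \<in> S" "a \<in> A" for s a
    using sum_occ_sas[OF that] .
  show "occ_sas \<delta> t s a s' = pt s a s' * (\<Sum>sb\<in>S. occ_sas \<delta> t s a sb)" if "s \<in> S" "a \<in> A" "s' \<in> S" for s a s'
    using occ_sas_factor[OF that(1,2)] .
qed

lemma mccormick_occ:
  assumes "stoch_policy T \<delta>"
  shows "mccormick T S Ob A p0 pe (occ_soa \<delta>) (occ_sas \<delta>) \<delta>"
  unfolding mccormick_def
proof (intro ballI conjI)
  fix t s ob a assume t: "t \<in> {1..T}" and s: "s \<in> S" and ob: "ob \<in> Ob" and a: "a \<in> A"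
  define q where "q = pe s ob * state_prob \<delta> (t - 1) s"
  have nu: "pe s ob * nu S A p0 (occ_sas \<delta>) t s = q"
    using t by (simp add: nu_occ_sas q_def)
  have occ: "occ_soa \<delta> t s ob a = \<delta> t ob a * q"
    by (simp add: occ_soa_def q_def mult.assoc)
  have d: "0 \<le> \<delta> t ob a" "\<delta> t ob a \<le> 1"
    using assms t ob a stoch_policy_le_1 by (auto simp: stoch_policy_def)
  have q: "0 \<le> q" "q \<le> 1"
    using pe_nonneg[OF s ob] pe_le_1[OF s ob] state_prob_nonneg[OF assms _ s, of "t - 1"]
      state_prob_le_1[OF assms _ s, of "t - 1"] t
    by (auto simp: q_def intro: mult_le_one)
  show "occ_soa \<delta> t s ob a \<le> pe s ob * nu S A p0 (occ_sas \<delta>) t s"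
    unfolding nu occ using d q by (simp add: mult_left_le_one_le)
  show "occ_soa \<delta> t s ob a \<le> \<delta> t ob a"
    unfolding occ using d q by (simp add: mult_left_le)
  have "0 \<le> (1 - \<delta> t ob a) * (1 - q)"
    using d q by simp
  then show "pe s ob * nu S A p0 (occ_sas \<delta>) t s + \<delta> t ob a - 1 \<le> occ_soa \<delta> t s ob a"
    unfolding nu occ by (simp add: algebra_simps)
qed

lemma inQd_relax_occ: "stoch_policy T \<delta> \<Longrightarrow> inQd_relax T S Ob A p0 pe pt (occ_soa \<delta>) (occ_sas \<delta>) \<delta>"
  unfolding inQd_relax_def using Q_base_occ mccormick_occ stoch_policy_le_1
  by (auto simp: stoch_policy_def)

lemma inQd_occ:
  "stoch_policy T \<delta> \<Longrightarrow> \<forall>t\<in>{1..T}. \<forall>ob\<in>Ob. \<forall>a\<in>A. \<delta> t ob a = 0 \<or> \<delta> t ob a = 1 \<Longrightarrow>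
    inQd T S Ob A p0 pe pt (occ_soa \<delta>) (occ_sas \<delta>) \<delta>"
  unfolding inQd_def using Q_base_occ mccormick_occ by blast

definition occ_pair :: "(nat \<Rightarrow> 'ob \<Rightarrow> 'a \<Rightarrow> real) \<Rightarrow> nat \<Rightarrow> 's \<Rightarrow> 'a \<Rightarrow> 's \<Rightarrow> 'ob \<Rightarrow> 'a \<Rightarrow> real" where
  "occ_pair \<delta> t s' a' s ob a = occ_sas \<delta> (t - 1) s' a' s * pe s ob * \<delta> t ob a"

lemma pcond_mult_sum:
  assumes "s' \<in> S" "a' \<in> A" "s \<in> S" "ob \<in> Ob"
  shows "c * (pe s ob * pt s' a' s) = pcond S pe pt s' a' ob s * (\<Sum>sb\<in>S. c * (pe sb ob * pt s' a' sb))"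
proof (cases "(\<Sum>sb\<in>S. pe sb ob * pt s' a' sb) = 0")
  case True
  moreover have "pe s ob * pt s' a' s = 0"
    using True assms finite_S pe_nonneg pt_nonneg by (simp add: sum_nonneg_eq_0_iff)
  ultimately show ?thesis
    by (simp add: sum_distrib_left [symmetric])
next
  case False
  then show ?thesis
    by (simp add: pcond_def sum_distrib_left [symmetric])
qed

lemma cuts_occ:
  assumes "stoch_policy T \<delta>"
  shows "cuts T S Ob A pe pt (occ_soa \<delta>) (occ_sas \<delta>) (occ_pair \<delta>)"
  unfolding cuts_def
proof (intro ballI conjI)
  fix t assume t: "t \<in> {2..T}"
  then have t': "t - 1 \<in> {1..T}"
    by auto
  have d0: "0 \<le> \<delta> t ob a" if "ob \<in> Ob" "a \<in> A" for ob a
    using assms t that by (auto simp: stoch_policy_def)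
  have d1: "(\<Sum>a\<in>A. \<delta> t ob a) = 1" if "ob \<in> Ob" for ob
    using assms t that by (auto simp: stoch_policy_def)
  show "0 \<le> occ_pair \<delta> t s' a' s ob a" if "s' \<in> S" "a' \<in> A" "s \<in> S" "ob \<in> Ob" "a \<in> A" for s' a' s ob a
    unfolding occ_pair_def using occ_sas_nonneg[OF assms t' that(1-3)] pe_nonneg[OF that(3,4)] d0[OF that(4,5)]
    by simp
  show "(\<Sum>s'\<in>S. \<Sum>a'\<in>A. occ_pair \<delta> t s' a' s ob a) = occ_soa \<delta> t s ob a" if "s \<in> S" "ob \<in> Ob" "a \<in> A" for s ob a
  proof -
    have "t - 1 = Suc (t - 2)"
      using t by auto
    then have "state_prob \<delta> (t - 1) s = (\<Sum>s'\<in>S. \<Sum>a'\<in>A. occ_sas \<delta> (t - 1) s' a' s)"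
      by (simp only: state_prob_Suc_occ_sas)
    then show ?thesis
      by (simp add: occ_pair_def occ_soa_def sum_distrib_left mult_ac)
  qed
  show "(\<Sum>a\<in>A. occ_pair \<delta> t s' a' s ob a) = pe s ob * pt s' a' s * (\<Sum>sb\<in>S. occ_sas \<delta> (t - 1) s' a' sb)"
    if "s' \<in> S" "a' \<in> A" "s \<in> S" "ob \<in> Ob" for s' a' s ob
  proof -
    have "(\<Sum>a\<in>A. occ_pair \<delta> t s' a' s ob a) = occ_sas \<delta> (t - 1) s' a' s * pe s ob * (\<Sum>a\<in>A. \<delta> t ob a)"
      by (simp add: occ_pair_def sum_distrib_left)
    then show ?thesis
      using occ_sas_factor[OF that(1,2), of \<delta> "t - 1" s] d1[OF that(4)] by (simp add: mult_ac)
  qed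
  show "occ_pair \<delta> t s' a' s ob a = pcond S pe pt s' a' ob s * (\<Sum>sb\<in>S. occ_pair \<delta> t s' a' sb ob a)"
    if "s' \<in> S" "a' \<in> A" "s \<in> S" "ob \<in> Ob" "a \<in> A" for s' a' s ob a
  proof -
    define c where "c = (\<Sum>sb\<in>S. occ_sas \<delta> (t - 1) s' a' sb) * \<delta> t ob a"
    have "occ_pair \<delta> t s' a' sb ob a = c * (pe sb ob * pt s' a' sb)" if "sb \<in> S" for sb
      using occ_sas_factor[OF \<open>s' \<in> S\<close> \<open>a' \<in> A\<close>, of \<delta> "t - 1" sb] by (simp add: occ_pair_def c_def)
    then show ?thesis
      using pcond_mult_sum[OF that(1-4)] that(3) by simp
  qed
qed

lemma inQ_tsoa:
  "inQ T S Ob A p0 pe pt tsoa tsas dl \<Longrightarrow> t \<in> {1..T} \<Longrightarrow> s \<in> S \<Longrightarrow> ob \<in> Ob \<Longrightarrow> a \<in> A \<Longrightarrow>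
    tsoa t s ob a = dl t ob a * pe s ob * nu S A p0 tsas t s"
proof -
  assume Q: "inQ T S Ob A p0 pe pt tsoa tsas dl" and *: "t \<in> {1..T}" "s \<in> S" "ob \<in> Ob" "a \<in> A"
  then have "tsoa t s ob a = dl t ob a * pe s ob * (\<Sum>ob'\<in>Ob. \<Sum>a'\<in>A. tsoa t s ob' a')"
    "(\<Sum>ob'\<in>Ob. \<Sum>a'\<in>A. tsoa t s ob' a') = nu S A p0 tsas t s"
    unfolding inQ_def Q_base_def by blast+
  then show ?thesis
    by simp
qed

lemma inQ_nu:
  assumes Q: "inQ T S Ob A p0 pe pt tsoa tsas dl"
  shows "t \<in> {1..T} \<Longrightarrow> s \<in> S \<Longrightarrow> nu S A p0 tsas t s = state_prob dl (t - 1) s"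
proof (induction t arbitrary: s)
  case (Suc t)
  show ?case
  proof (cases "t = 0")
    case False
    then have t: "t \<in> {1..T}"
      using Suc.prems by auto
    have "tsas t s'' a'' s = pt s'' a'' s * (\<Sum>ob\<in>Ob. dl t ob a'' * pe s'' ob * state_prob dl (t - 1) s'')"
      if "s'' \<in> S" "a'' \<in> A" for s'' a''
    proof -
      have "tsas t s'' a'' s = pt s'' a'' s * (\<Sum>sb\<in>S. tsas t s'' a'' sb)"
        "(\<Sum>sb\<in>S. tsas t s'' a'' sb) = (\<Sum>ob\<in>Ob. tsoa t s'' ob a'')"
        using Q t that Suc.prems(2) unfolding inQ_def Q_base_def by blast+
      moreover have "tsoa t s'' ob a'' = dl t ob a'' * pe s'' ob * state_prob dl (t - 1) s''" if "ob \<in> Ob" for ob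
        using inQ_tsoa[OF Q t \<open>s'' \<in> S\<close> that \<open>a'' \<in> A\<close>] Suc.IH[OF t \<open>s'' \<in> S\<close>] by simp
      ultimately show ?thesis
        by simp
    qed
    then have "nu S A p0 tsas (Suc t) s = state_prob dl t s"
      using False by (cases t) (simp_all add: nu_def)
    then show ?thesis
      by simp
  qed (simp add: nu_def)
qed simp

lemma inQ_imp_occ_soa:
  assumes "inQ T S Ob A p0 pe pt tsoa tsas dl" "t \<in> {1..T}" "s \<in> S" "ob \<in> Ob" "a \<in> A"
  shows "tsoa t s ob a = occ_soa dl t s ob a"
  using inQ_tsoa[OF assms] inQ_nu[OF assms(1-3)] by (simp add: occ_soa_def)

lemma inQ_imp_stoch_policy: "inQ T S Ob A p0 pe pt tsoa tsas dl \<Longrightarrow> stoch_policy T dl"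
  by (auto simp: inQ_def Q_base_def stoch_policy_def)

lemma inQd_imp_inQ:
  assumes Q: "inQd T S Ob A p0 pe pt tsoa tsas dl"
  shows "inQ T S Ob A p0 pe pt tsoa tsas dl"
proof -
  have "tsoa t s ob a = dl t ob a * pe s ob * nu S A p0 tsas t s"
    if "t \<in> {1..T}" "s \<in> S" "ob \<in> Ob" "a \<in> A" for t s ob a
  proof -
    have "0 \<le> tsoa t s ob a" "dl t ob a = 0 \<or> dl t ob a = 1"
      using Q that by (auto simp: inQd_def Q_base_def)
    moreover have "tsoa t s ob a \<le> pe s ob * nu S A p0 tsas t s" "tsoa t s ob a \<le> dl t ob a"
      "pe s ob * nu S A p0 tsas t s + dl t ob a - 1 \<le> tsoa t s ob a"
      using Q that by (auto simp: inQd_def mccormick_def)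
    ultimately show ?thesis
      by auto
  qed
  moreover have "(\<Sum>ob\<in>Ob. \<Sum>a\<in>A. tsoa t s ob a) = nu S A p0 tsas t s" if "t \<in> {1..T}" "s \<in> S" for t s
    using Q that by (auto simp: inQd_def Q_base_def)
  ultimately show ?thesis
    using Q by (simp add: inQ_def inQd_def)
qed

lemma binary_stoch_policy_point_mass:
  assumes "stoch_policy T \<delta>" "\<forall>t\<in>{1..T}. \<forall>ob\<in>Ob. \<forall>a\<in>A. \<delta> t ob a = 0 \<or> \<delta> t ob a = 1"
    and "t \<in> {1..T}" "ob \<in> Ob"
  shows "\<exists>a0\<in>A. \<forall>a\<in>A. \<delta> t ob a = (if a = a0 then 1 else 0)"
proof -
  have sum1: "(\<Sum>a\<in>A. \<delta> t ob a) = 1" and nonneg: "\<forall>a\<in>A. 0 \<le> \<delta> t ob a"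
    using assms(1,3,4) by (auto simp: stoch_policy_def)
  obtain a0 where a0: "a0 \<in> A" "\<delta> t ob a0 = 1"
    using sum1 assms(2-4) by (metis (mono_tags, lifting) sum.neutral zero_neq_one)
  have "\<delta> t ob a = 0" if "a \<in> A" "a \<noteq> a0" for a
  proof (rule ccontr)
    assume "\<delta> t ob a \<noteq> 0"
    then have "2 = (\<Sum>a'\<in>{a0, a}. \<delta> t ob a')"
      using a0 assms(2-4) that by fastforce
    also have "\<dots> \<le> 1"
      unfolding sum1 [symmetric] using a0 that nonneg finite_A by (intro sum_mono2) auto
    finally show False
      by simp
  qed
  with a0 show ?thesis
    by auto
qed

definition set_action :: "(nat \<Rightarrow> 'ob \<Rightarrow> 'a \<Rightarrow> real) \<Rightarrow> nat \<Rightarrow> 'ob \<Rightarrow> 'a \<Rightarrow> nat \<Rightarrow> 'ob \<Rightarrow> 'a \<Rightarrow> real" where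
  "set_action \<delta> t0 ob0 a0 = \<delta>(t0 := (\<delta> t0)(ob0 := (\<lambda>a. if a = a0 then 1 else 0)))"

lemma set_action_other_time [simp]: "t \<noteq> t0 \<Longrightarrow> set_action \<delta> t0 ob0 a0 t = \<delta> t"
  by (simp add: set_action_def)

lemma set_action_other: "\<not> (t = t0 \<and> ob = ob0) \<Longrightarrow> set_action \<delta> t0 ob0 a0 t ob = \<delta> t ob"
  by (auto simp: set_action_def)

lemma stoch_policy_set_action: "stoch_policy T \<delta> \<Longrightarrow> a0 \<in> A \<Longrightarrow> stoch_policy T (set_action \<delta> t0 ob0 a0)"
  using finite_A by (auto simp: stoch_policy_def set_action_def)

lemma state_prob_cong:
  "\<forall>t\<in>{1..n}. \<forall>ob\<in>Ob. \<forall>a\<in>A. \<delta> t ob a = \<delta>' t ob a \<Longrightarrow> state_prob \<delta> n s = state_prob \<delta>' n s"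
  by (induction n arbitrary: s) auto

lemma state_prob_set_action: "n < t0 \<Longrightarrow> state_prob (set_action \<delta> t0 ob0 a0) n s = state_prob \<delta> n s"
  by (rule state_prob_cong) simp

lemma mix_set_action:
  assumes "stoch_policy T \<delta>" "t0 \<in> {1..T}" "ob0 \<in> Ob" "a \<in> A"
  shows "(\<Sum>a0\<in>A. \<delta> t0 ob0 a0 * set_action \<delta> t0 ob0 a0 t ob a) = \<delta> t ob a"
proof (cases "t = t0 \<and> ob = ob0")
  case True
  then have "(\<Sum>a0\<in>A. \<delta> t0 ob0 a0 * set_action \<delta> t0 ob0 a0 t ob a) = (\<Sum>a0\<in>A. if a0 = a then \<delta> t0 ob0 a0 else 0)"
    by (intro sum.cong) (auto simp: set_action_def)
  with True show ?thesis
    using assms(4) finite_A by simp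
next
  case False
  then have "(\<Sum>a0\<in>A. \<delta> t0 ob0 a0 * set_action \<delta> t0 ob0 a0 t ob a) = (\<Sum>a0\<in>A. \<delta> t0 ob0 a0) * \<delta> t ob a"
    by (simp add: set_action_other sum_distrib_right)
  with assms(1-3) show ?thesis
    by (simp add: stoch_policy_def)
qed

lemma mix_set_action_mult:
  assumes \<delta>: "stoch_policy T \<delta>" "t0 \<in> {1..T}" "ob0 \<in> Ob" "a \<in> A"
    and at_t0: "t = t0 \<Longrightarrow> \<forall>a0. F (set_action \<delta> t0 ob0 a0) = F \<delta>"
    and off_t0: "t \<noteq> t0 \<Longrightarrow> (\<Sum>a0\<in>A. \<delta> t0 ob0 a0 * F (set_action \<delta> t0 ob0 a0)) = F \<delta>"
  shows "(\<Sum>a0\<in>A. \<delta> t0 ob0 a0 * (set_action \<delta> t0 ob0 a0 t ob a * F (set_action \<delta> t0 ob0 a0))) = \<delta> t ob a * F \<delta>"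
proof (cases "t = t0")
  case True
  then have "(\<Sum>a0\<in>A. \<delta> t0 ob0 a0 * (set_action \<delta> t0 ob0 a0 t ob a * F (set_action \<delta> t0 ob0 a0)))
      = (\<Sum>a0\<in>A. \<delta> t0 ob0 a0 * set_action \<delta> t0 ob0 a0 t ob a) * F \<delta>"
    using at_t0 by (simp add: sum_distrib_right mult.assoc)
  then show ?thesis
    using mix_set_action[OF \<delta>] by simp
next
  case False
  then show ?thesis
    using off_t0 by (simp add: sum_distrib_left [symmetric] mult.left_commute)
qed

lemma state_prob_mix:
  assumes \<delta>: "stoch_policy T \<delta>" "t0 \<in> {1..T}" "ob0 \<in> Ob"
  shows "state_prob \<delta> n s = (\<Sum>a0\<in>A. \<delta> t0 ob0 a0 * state_prob (set_action \<delta> t0 ob0 a0) n s)"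
proof (induction n arbitrary: s)
  case 0
  show ?case
    using \<delta> by (simp add: stoch_policy_def sum_distrib_right [symmetric])
next
  case (Suc n)
  define w u where "w = \<delta> t0 ob0" and "u = set_action \<delta> t0 ob0"
  have "(\<Sum>a0\<in>A. w a0 * state_prob (u a0) (Suc n) s)
      = (\<Sum>a0\<in>A. \<Sum>s'\<in>S. \<Sum>a\<in>A. \<Sum>ob\<in>Ob. pt s' a s * pe s' ob * (w a0 * (u a0 (Suc n) ob a * state_prob (u a0) n s')))"
    by (simp add: sum_distrib_left mult_ac)
  also have "\<dots> = (\<Sum>s'\<in>S. \<Sum>a\<in>A. \<Sum>ob\<in>Ob. \<Sum>a0\<in>A. pt s' a s * pe s' ob * (w a0 * (u a0 (Suc n) ob a * state_prob (u a0) n s')))"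
    by (rule trans[OF sum.swap], rule sum.cong[OF refl], rule trans[OF sum.swap], rule sum.cong[OF refl], rule sum.swap)
  also have "\<dots> = (\<Sum>s'\<in>S. \<Sum>a\<in>A. \<Sum>ob\<in>Ob. pt s' a s * pe s' ob * (\<delta> (Suc n) ob a * state_prob \<delta> n s'))"
  proof (intro sum.cong refl)
    fix s' a ob assume "a \<in> A"
    have "(\<Sum>a0\<in>A. w a0 * (u a0 (Suc n) ob a * state_prob (u a0) n s')) = \<delta> (Suc n) ob a * state_prob \<delta> n s'"
      unfolding w_def u_def
      by (rule mix_set_action_mult[OF \<delta> \<open>a \<in> A\<close>]) (simp_all add: state_prob_set_action Suc.IH)
    then show "(\<Sum>a0\<in>A. pt s' a s * pe s' ob * (w a0 * (u a0 (Suc n) ob a * state_prob (u a0) n s')))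
        = pt s' a s * pe s' ob * (\<delta> (Suc n) ob a * state_prob \<delta> n s')"
      by (simp add: sum_distrib_left [symmetric])
  qed
  also have "\<dots> = state_prob \<delta> (Suc n) s"
    by (simp add: sum_distrib_left mult_ac)
  finally show ?case
    by (simp add: w_def u_def)
qed

lemma occ_soa_mix:
  assumes \<delta>: "stoch_policy T \<delta>" "t0 \<in> {1..T}" "ob0 \<in> Ob" and "a \<in> A"
  shows "occ_soa \<delta> t s ob a = (\<Sum>a0\<in>A. \<delta> t0 ob0 a0 * occ_soa (set_action \<delta> t0 ob0 a0) t s ob a)"
proof -
  have "\<delta> t ob a * (pe s ob * state_prob \<delta> (t - 1) s) = (\<Sum>a0\<in>A. \<delta> t0 ob0 a0 *
      (set_action \<delta> t0 ob0 a0 t ob a * (pe s ob * state_prob (set_action \<delta> t0 ob0 a0) (t - 1) s)))"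
  proof (rule mix_set_action_mult[where F = "\<lambda>\<delta>'. pe s ob * state_prob \<delta>' (t - 1) s", OF \<delta> \<open>a \<in> A\<close>, symmetric])
    show "\<forall>a0. pe s ob * state_prob (set_action \<delta> t0 ob0 a0) (t - 1) s = pe s ob * state_prob \<delta> (t - 1) s"
      if "t = t0"
      using that \<delta>(2) by (simp add: state_prob_set_action)
    show "(\<Sum>a0\<in>A. \<delta> t0 ob0 a0 * (pe s ob * state_prob (set_action \<delta> t0 ob0 a0) (t - 1) s))
        = pe s ob * state_prob \<delta> (t - 1) s"
      using state_prob_mix[OF \<delta>, of "t - 1" s] by (simp add: sum_distrib_left mult.left_commute)
  qed
  then show ?thesis
    by (simp add: occ_soa_def mult.assoc)
qed

definition policy_value :: "nat \<Rightarrow> (nat \<Rightarrow> 's \<Rightarrow> 'a \<Rightarrow> real) \<Rightarrow> (nat \<Rightarrow> 'ob \<Rightarrow> 'a \<Rightarrow> real) \<Rightarrow> real" where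
  "policy_value T g \<delta> = (\<Sum>t\<in>{1..T}. \<Sum>s\<in>S. \<Sum>ob\<in>Ob. \<Sum>a\<in>A. occ_soa \<delta> t s ob a * g t s a)"

lemma policy_value_mix:
  assumes "stoch_policy T \<delta>" "t0 \<in> {1..T}" "ob0 \<in> Ob"
  shows "policy_value T g \<delta> = (\<Sum>a0\<in>A. \<delta> t0 ob0 a0 * policy_value T g (set_action \<delta> t0 ob0 a0))"
proof -
  have "(\<Sum>a0\<in>A. \<delta> t0 ob0 a0 * policy_value T g (set_action \<delta> t0 ob0 a0)) = (\<Sum>t\<in>{1..T}. \<Sum>s\<in>S. \<Sum>ob\<in>Ob. \<Sum>a\<in>A.
      (\<Sum>a0\<in>A. \<delta> t0 ob0 a0 * occ_soa (set_action \<delta> t0 ob0 a0) t s ob a) * g t s a)"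
    by (simp only: policy_value_def sum_mult_sum_commute sum_distrib_right mult.assoc)
  also have "\<dots> = policy_value T g \<delta>"
    unfolding policy_value_def by (intro sum.cong refl) (simp add: occ_soa_mix[OF assms])
  finally show ?thesis ..
qed

lemma policy_value_cong:
  "\<forall>t\<in>{1..T}. \<forall>ob\<in>Ob. \<forall>a\<in>A. \<delta> t ob a = \<delta>' t ob a \<Longrightarrow> policy_value T g \<delta> = policy_value T g \<delta>'"
proof -
  assume eq: "\<forall>t\<in>{1..T}. \<forall>ob\<in>Ob. \<forall>a\<in>A. \<delta> t ob a = \<delta>' t ob a"
  then have "state_prob \<delta> (t - 1) s = state_prob \<delta>' (t - 1) s" if "t \<in> {1..T}" for t s
    using that by (intro state_prob_cong) auto
  with eq show ?thesis
    unfolding policy_value_def occ_soa_def by (intro sum.cong refl) auto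
qed

text \<open>Fixing the decision rules one observation at a time, a best action never decreases the
  value, since the value is affine in each decision rule.\<close>

lemma exists_deterministic_policy_ge:
  assumes "stoch_policy T \<delta>"
  shows "\<exists>\<delta>'. stoch_policy T \<delta>' \<and> (\<forall>t\<in>{1..T}. \<forall>ob\<in>Ob. \<forall>a\<in>A. \<delta>' t ob a = 0 \<or> \<delta>' t ob a = 1)
    \<and> policy_value T g \<delta> \<le> policy_value T g \<delta>'"
proof -
  have "\<exists>\<delta>'. stoch_policy T \<delta>' \<and> (\<forall>(t, ob)\<in>W. \<forall>a\<in>A. \<delta>' t ob a = 0 \<or> \<delta>' t ob a = 1)
      \<and> policy_value T g \<delta> \<le> policy_value T g \<delta>'"
    if "finite W" "W \<subseteq> {1..T} \<times> Ob" for W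
    using that
  proof (induction W rule: finite_induct)
    case empty
    then show ?case
      using assms by blast
  next
    case (insert w W)
    obtain t0 ob0 where w: "w = (t0, ob0)" "t0 \<in> {1..T}" "ob0 \<in> Ob"
      using insert.prems by auto
    from insert obtain \<delta>1 where \<delta>1: "stoch_policy T \<delta>1" "\<forall>(t, ob)\<in>W. \<forall>a\<in>A. \<delta>1 t ob a = 0 \<or> \<delta>1 t ob a = 1"
      "policy_value T g \<delta> \<le> policy_value T g \<delta>1"
      by auto
    have "\<forall>a\<in>A. 0 \<le> \<delta>1 t0 ob0 a" "(\<Sum>a\<in>A. \<delta>1 t0 ob0 a) = 1"
      using \<delta>1(1) w by (auto simp: stoch_policy_def)
    then obtain a0 where "a0 \<in> A" and a0: "(\<Sum>a\<in>A. \<delta>1 t0 ob0 a * policy_value T g (set_action \<delta>1 t0 ob0 a))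
        \<le> policy_value T g (set_action \<delta>1 t0 ob0 a0)"
      using convex_comb_le_member[OF finite_A A_nonempty, where f = "\<lambda>a. policy_value T g (set_action \<delta>1 t0 ob0 a)"]
      by blast
    show ?case
    proof (intro exI conjI)
      show "stoch_policy T (set_action \<delta>1 t0 ob0 a0)"
        using stoch_policy_set_action[OF \<delta>1(1) \<open>a0 \<in> A\<close>] .
      show "\<forall>(t, ob)\<in>insert w W. \<forall>a\<in>A. set_action \<delta>1 t0 ob0 a0 t ob a = 0 \<or> set_action \<delta>1 t0 ob0 a0 t ob a = 1"
        using \<delta>1(2) w by (fastforce simp: set_action_def)
      show "policy_value T g \<delta> \<le> policy_value T g (set_action \<delta>1 t0 ob0 a0)"
        using \<delta>1(3) a0 policy_value_mix[OF \<delta>1(1) w(2,3), of g] by simp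
    qed
  qed
  from this[of "{1..T} \<times> Ob"] show ?thesis
    using finite_Ob by auto
qed

lemma Q_base_reward:
  assumes "Q_base T S Ob A p0 pt tsoa tsas dl" "t \<in> {1..T}" "s \<in> S" "a \<in> A"
  shows "(\<Sum>s'\<in>S. f s' * tsas t s a s') = (\<Sum>s'\<in>S. f s' * pt s a s') * (\<Sum>ob\<in>Ob. tsoa t s ob a)"
proof -
  have "tsas t s a s' = pt s a s' * (\<Sum>ob\<in>Ob. tsoa t s ob a)" if "s' \<in> S" for s'
    using assms that unfolding Q_base_def by metis
  then show ?thesis
    by (simp add: sum_distrib_right mult.assoc)
qed

lemma Q_base_mass:
  assumes Q: "Q_base T S Ob A p0 pt tsoa tsas dl" and t: "t \<in> {1..T}"
  shows "(\<Sum>s\<in>S. \<Sum>a\<in>A. \<Sum>s'\<in>S. tsas t s a s') = (\<Sum>s\<in>S. nu S A p0 tsas t s)"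
proof -
  have "(\<Sum>s\<in>S. \<Sum>a\<in>A. \<Sum>s'\<in>S. tsas t s a s') = (\<Sum>s\<in>S. \<Sum>a\<in>A. \<Sum>ob\<in>Ob. tsoa t s ob a)"
    using Q t unfolding Q_base_def by (intro sum.cong refl) blast
  also have "\<dots> = (\<Sum>s\<in>S. \<Sum>ob\<in>Ob. \<Sum>a\<in>A. tsoa t s ob a)"
    by (intro sum.cong refl sum.swap)
  also have "\<dots> = (\<Sum>s\<in>S. nu S A p0 tsas t s)"
    using Q t unfolding Q_base_def by (intro sum.cong refl) blast
  finally show ?thesis .
qed

lemma Q_base_sum_nu:
  assumes Q: "Q_base T S Ob A p0 pt tsoa tsas dl"
  shows "t \<in> {1..T} \<Longrightarrow> (\<Sum>s\<in>S. nu S A p0 tsas t s) = 1"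
proof (induction t)
  case (Suc t)
  show ?case
  proof (cases "t = 0")
    case False
    then have t: "t \<in> {1..T}"
      using Suc by auto
    have "(\<Sum>s'\<in>S. nu S A p0 tsas (Suc t) s') = (\<Sum>s'\<in>S. \<Sum>s\<in>S. \<Sum>a\<in>A. tsas t s a s')"
      using False by (simp add: nu_def)
    also have "\<dots> = (\<Sum>s\<in>S. \<Sum>a\<in>A. \<Sum>s'\<in>S. tsas t s a s')"
      by (subst sum.swap, intro sum.cong refl sum.swap)
    finally show ?thesis
      using Suc t Q_base_mass[OF Q t] by simp
  qed (simp add: nu_def sum_p0)
qed simp

lemma Q_base_tsas_le_1:
  assumes Q: "Q_base T S Ob A p0 pt tsoa tsas dl"
    and "t \<in> {1..T}" "s \<in> S" "a \<in> A" "s' \<in> S"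
  shows "tsas t s a s' \<le> 1"
proof -
  have nonneg: "\<forall>s\<in>S. \<forall>a\<in>A. \<forall>s'\<in>S. 0 \<le> tsas t s a s'"
    using Q assms(2) unfolding Q_base_def by blast
  have "tsas t s a s' \<le> (\<Sum>s'\<in>S. tsas t s a s')"
    using nonneg assms(3-5) finite_S by (intro member_le_sum) auto
  also have "\<dots> \<le> (\<Sum>a\<in>A. \<Sum>s'\<in>S. tsas t s a s')"
    using nonneg assms(3,4) finite_A
    by (intro member_le_sum[of a A "\<lambda>a. \<Sum>s'\<in>S. tsas t s a s'"]) (auto intro: sum_nonneg)
  also have "\<dots> \<le> (\<Sum>s\<in>S. \<Sum>a\<in>A. \<Sum>s'\<in>S. tsas t s a s')"
    using nonneg assms(3) finite_S
    by (intro member_le_sum[of s S "\<lambda>s. \<Sum>a\<in>A. \<Sum>s'\<in>S. tsas t s a s'"]) (auto intro!: sum_nonneg)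
  also have "\<dots> = 1"
    using Q_base_mass[OF Q assms(2)] Q_base_sum_nu[OF Q assms(2)] by simp
  finally show ?thesis .
qed

end

section \<open>Convex combinations of relaxed solutions\<close>

context
  fixes P :: "'p set" and l :: "'p \<Rightarrow> real"
  assumes finite_P: "finite P" and l_nonneg: "\<forall>p\<in>P. 0 \<le> l p" and sum_l: "(\<Sum>p\<in>P. l p) = 1"
begin

lemma convex_comb_const: "(\<Sum>p\<in>P. l p * c) = c"
  using sum_l by (simp add: sum_distrib_right [symmetric])

lemma convex_comb_mono: "(\<And>p. p \<in> P \<Longrightarrow> f p \<le> g p) \<Longrightarrow> (\<Sum>p\<in>P. l p * f p) \<le> (\<Sum>p\<in>P. l p * g p)"
  using l_nonneg by (intro sum_mono mult_left_mono) auto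

lemma convex_comb_nonneg: "(\<And>p. p \<in> P \<Longrightarrow> 0 \<le> f p) \<Longrightarrow> 0 \<le> (\<Sum>p\<in>P. l p * f p)"
  using convex_comb_mono[of "\<lambda>_. 0" f] by simp

lemma nu_convex_comb:
  "nu S A p0 (\<lambda>t s a s'. \<Sum>p\<in>P. l p * TS p t s a s') t s = (\<Sum>p\<in>P. l p * nu S A p0 (TS p) t s)"
  by (simp add: nu_def convex_comb_const sum_mult_sum_commute)

lemma Q_base_convex_comb:
  assumes "\<forall>p\<in>P. Q_base T S Ob A p0 pt (TO p) (TS p) (DL p)"
  shows "Q_base T S Ob A p0 pt (\<lambda>t s ob a. \<Sum>p\<in>P. l p * TO p t s ob a)
    (\<lambda>t s a s'. \<Sum>p\<in>P. l p * TS p t s a s') (\<lambda>t ob a. \<Sum>p\<in>P. l p * DL p t ob a)"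
  unfolding Q_base_def
proof (intro ballI conjI)
  fix t assume t: "t \<in> {1..T}"
  note Q = assms[unfolded Q_base_def, rule_format, OF _ t]
  have nonneg: "p \<in> P \<Longrightarrow> s \<in> S \<Longrightarrow> ob \<in> Ob \<Longrightarrow> a \<in> A \<Longrightarrow> 0 \<le> TO p t s ob a"
    "p \<in> P \<Longrightarrow> s \<in> S \<Longrightarrow> a \<in> A \<Longrightarrow> s' \<in> S \<Longrightarrow> 0 \<le> TS p t s a s'"
    "p \<in> P \<Longrightarrow> ob \<in> Ob \<Longrightarrow> a \<in> A \<Longrightarrow> 0 \<le> DL p t ob a" for p s ob a s'
    using Q by blast+
  have eqs: "p \<in> P \<Longrightarrow> ob \<in> Ob \<Longrightarrow> (\<Sum>a\<in>A. DL p t ob a) = 1"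
    "p \<in> P \<Longrightarrow> s \<in> S \<Longrightarrow> (\<Sum>ob\<in>Ob. \<Sum>a\<in>A. TO p t s ob a) = nu S A p0 (TS p) t s"
    "p \<in> P \<Longrightarrow> s \<in> S \<Longrightarrow> a \<in> A \<Longrightarrow> (\<Sum>sb\<in>S. TS p t s a sb) = (\<Sum>ob\<in>Ob. TO p t s ob a)"
    for p s ob a
    using Q by blast+
  have trans_eq: "p \<in> P \<Longrightarrow> s \<in> S \<Longrightarrow> a \<in> A \<Longrightarrow> s' \<in> S \<Longrightarrow>
      l p * TS p t s a s' = pt s a s' * (l p * (\<Sum>sb\<in>S. TS p t s a sb))" for p s a s'
    using Q by (simp add: mult.left_commute)
  show "0 \<le> (\<Sum>p\<in>P. l p * TO p t s ob a)" if "s \<in> S" "ob \<in> Ob" "a \<in> A" for s ob a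
    using nonneg that by (intro convex_comb_nonneg)
  show "0 \<le> (\<Sum>p\<in>P. l p * TS p t s a s')" if "s \<in> S" "a \<in> A" "s' \<in> S" for s a s'
    using nonneg that by (intro convex_comb_nonneg)
  show "0 \<le> (\<Sum>p\<in>P. l p * DL p t ob a)" if "ob \<in> Ob" "a \<in> A" for ob a
    using nonneg that by (intro convex_comb_nonneg)
  show "(\<Sum>a\<in>A. \<Sum>p\<in>P. l p * DL p t ob a) = 1" if "ob \<in> Ob" for ob
    using that by (simp add: sum_mult_sum_commute [symmetric] eqs sum_l)
  show "(\<Sum>ob\<in>Ob. \<Sum>a\<in>A. \<Sum>p\<in>P. l p * TO p t s ob a) = nu S A p0 (\<lambda>t s a s'. \<Sum>p\<in>P. l p * TS p t s a s') t s"
    if "s \<in> S" for s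
    using that by (simp add: nu_convex_comb sum_mult_sum_commute [symmetric] eqs)
  show "(\<Sum>sb\<in>S. \<Sum>p\<in>P. l p * TS p t s a sb) = (\<Sum>ob\<in>Ob. \<Sum>p\<in>P. l p * TO p t s ob a)"
    if "s \<in> S" "a \<in> A" for s a
    using that by (simp add: sum_mult_sum_commute [symmetric] eqs)
  show "(\<Sum>p\<in>P. l p * TS p t s a s') = pt s a s' * (\<Sum>sb\<in>S. \<Sum>p\<in>P. l p * TS p t s a sb)"
    if "s \<in> S" "a \<in> A" "s' \<in> S" for s a s'
  proof -
    have "pt s a s' * (\<Sum>sb\<in>S. \<Sum>p\<in>P. l p * TS p t s a sb)
        = (\<Sum>p\<in>P. pt s a s' * (l p * (\<Sum>sb\<in>S. TS p t s a sb)))"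
      by (subst sum_mult_sum_commute [symmetric]) (rule sum_distrib_left)
    then show ?thesis
      using that by (simp add: trans_eq)
  qed
qed

lemma mccormick_convex_comb:
  assumes "\<forall>p\<in>P. mccormick T S Ob A p0 pe (TO p) (TS p) (DL p)"
  shows "mccormick T S Ob A p0 pe (\<lambda>t s ob a. \<Sum>p\<in>P. l p * TO p t s ob a)
    (\<lambda>t s a s'. \<Sum>p\<in>P. l p * TS p t s a s') (\<lambda>t ob a. \<Sum>p\<in>P. l p * DL p t ob a)"
  unfolding mccormick_def nu_convex_comb
proof (intro ballI conjI)
  fix t s ob a assume "t \<in> {1..T}" "s \<in> S" "ob \<in> Ob" "a \<in> A"
  then have M: "TO p t s ob a \<le> pe s ob * nu S A p0 (TS p) t s" "TO p t s ob a \<le> DL p t ob a"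
    "pe s ob * nu S A p0 (TS p) t s + DL p t ob a - 1 \<le> TO p t s ob a" if "p \<in> P" for p
    using assms that unfolding mccormick_def by blast+
  have "(\<Sum>p\<in>P. l p * TO p t s ob a) \<le> (\<Sum>p\<in>P. l p * (pe s ob * nu S A p0 (TS p) t s))"
    by (intro convex_comb_mono M)
  then show "(\<Sum>p\<in>P. l p * TO p t s ob a) \<le> pe s ob * (\<Sum>p\<in>P. l p * nu S A p0 (TS p) t s)"
    by (simp add: sum_distrib_left mult.left_commute)
  show "(\<Sum>p\<in>P. l p * TO p t s ob a) \<le> (\<Sum>p\<in>P. l p * DL p t ob a)"
    by (intro convex_comb_mono M)
  have "pe s ob * (\<Sum>p\<in>P. l p * nu S A p0 (TS p) t s) + (\<Sum>p\<in>P. l p * DL p t ob a) - 1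
      = (\<Sum>p\<in>P. l p * (pe s ob * nu S A p0 (TS p) t s + DL p t ob a - 1))"
    by (simp add: distrib_left right_diff_distrib sum.distrib sum_subtractf sum_l
        sum_distrib_left mult.left_commute)
  also have "\<dots> \<le> (\<Sum>p\<in>P. l p * TO p t s ob a)"
    by (intro convex_comb_mono M)
  finally show "pe s ob * (\<Sum>p\<in>P. l p * nu S A p0 (TS p) t s) + (\<Sum>p\<in>P. l p * DL p t ob a) - 1
      \<le> (\<Sum>p\<in>P. l p * TO p t s ob a)" .
qed

lemma cuts_convex_comb:
  assumes "\<forall>p\<in>P. cuts T S Ob A pe pt (TO p) (TS p) (X p)"
  shows "cuts T S Ob A pe pt (\<lambda>t s ob a. \<Sum>p\<in>P. l p * TO p t s ob a)
    (\<lambda>t s a s'. \<Sum>p\<in>P. l p * TS p t s a s') (\<lambda>t s' a' s ob a. \<Sum>p\<in>P. l p * X p t s' a' s ob a)"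
  unfolding cuts_def
proof (intro ballI conjI)
  fix t assume t: "t \<in> {2..T}"
  note C = assms[unfolded cuts_def, rule_format, OF _ t]
  have nonneg: "p \<in> P \<Longrightarrow> s' \<in> S \<Longrightarrow> a' \<in> A \<Longrightarrow> s \<in> S \<Longrightarrow> ob \<in> Ob \<Longrightarrow> a \<in> A \<Longrightarrow>
      0 \<le> X p t s' a' s ob a" for p s' a' s ob a
    using C by blast
  have eqs: "p \<in> P \<Longrightarrow> s \<in> S \<Longrightarrow> ob \<in> Ob \<Longrightarrow> a \<in> A \<Longrightarrow>
      (\<Sum>s'\<in>S. \<Sum>a'\<in>A. X p t s' a' s ob a) = TO p t s ob a"
    "p \<in> P \<Longrightarrow> s' \<in> S \<Longrightarrow> a' \<in> A \<Longrightarrow> s \<in> S \<Longrightarrow> ob \<in> Ob \<Longrightarrow>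
      (\<Sum>a\<in>A. X p t s' a' s ob a) = pe s ob * pt s' a' s * (\<Sum>sb\<in>S. TS p (t - 1) s' a' sb)"
    for p s' a' s ob a
    using C by blast+
  have cond_eq: "p \<in> P \<Longrightarrow> s' \<in> S \<Longrightarrow> a' \<in> A \<Longrightarrow> s \<in> S \<Longrightarrow> ob \<in> Ob \<Longrightarrow> a \<in> A \<Longrightarrow>
      l p * X p t s' a' s ob a = pcond S pe pt s' a' ob s * (l p * (\<Sum>sb\<in>S. X p t s' a' sb ob a))"
    for p s' a' s ob a
  proof -
    assume "p \<in> P" "s' \<in> S" "a' \<in> A" "s \<in> S" "ob \<in> Ob" "a \<in> A"
    then have "X p t s' a' s ob a = pcond S pe pt s' a' ob s * (\<Sum>sb\<in>S. X p t s' a' sb ob a)"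
      using C by blast
    then show ?thesis
      by simp
  qed
  show "0 \<le> (\<Sum>p\<in>P. l p * X p t s' a' s ob a)"
    if "s' \<in> S" "a' \<in> A" "s \<in> S" "ob \<in> Ob" "a \<in> A" for s' a' s ob a
    using nonneg that by (intro convex_comb_nonneg)
  show "(\<Sum>s'\<in>S. \<Sum>a'\<in>A. \<Sum>p\<in>P. l p * X p t s' a' s ob a) = (\<Sum>p\<in>P. l p * TO p t s ob a)"
    if "s \<in> S" "ob \<in> Ob" "a \<in> A" for s ob a
    using that by (simp add: sum_mult_sum_commute [symmetric] eqs)
  show "(\<Sum>a\<in>A. \<Sum>p\<in>P. l p * X p t s' a' s ob a)
      = pe s ob * pt s' a' s * (\<Sum>sb\<in>S. \<Sum>p\<in>P. l p * TS p (t - 1) s' a' sb)"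
    if "s' \<in> S" "a' \<in> A" "s \<in> S" "ob \<in> Ob" for s' a' s ob
  proof -
    have "pe s ob * pt s' a' s * (\<Sum>sb\<in>S. \<Sum>p\<in>P. l p * TS p (t - 1) s' a' sb)
        = (\<Sum>p\<in>P. l p * (pe s ob * pt s' a' s * (\<Sum>sb\<in>S. TS p (t - 1) s' a' sb)))"
      by (subst sum_mult_sum_commute [symmetric]) (simp add: sum_distrib_left mult.left_commute)
    then show ?thesis
      using that by (simp add: sum_mult_sum_commute [symmetric] eqs)
  qed
  show "(\<Sum>p\<in>P. l p * X p t s' a' s ob a) = pcond S pe pt s' a' ob s * (\<Sum>sb\<in>S. \<Sum>p\<in>P. l p * X p t s' a' sb ob a)"
    if "s' \<in> S" "a' \<in> A" "s \<in> S" "ob \<in> Ob" "a \<in> A" for s' a' s ob a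
  proof -
    have "pcond S pe pt s' a' ob s * (\<Sum>sb\<in>S. \<Sum>p\<in>P. l p * X p t s' a' sb ob a)
        = (\<Sum>p\<in>P. pcond S pe pt s' a' ob s * (l p * (\<Sum>sb\<in>S. X p t s' a' sb ob a)))"
      by (subst sum_mult_sum_commute [symmetric]) (rule sum_distrib_left)
    then show ?thesis
      using that by (simp add: cond_eq)
  qed
qed

lemma inQd_relax_cuts_convex_comb:
  assumes "\<forall>p\<in>P. inQd_relax T S Ob A p0 pe pt (TO p) (TS p) (DL p) \<and> cuts T S Ob A pe pt (TO p) (TS p) (X p)"
  shows "inQd_relax T S Ob A p0 pe pt (\<lambda>t s ob a. \<Sum>p\<in>P. l p * TO p t s ob a)
      (\<lambda>t s a s'. \<Sum>p\<in>P. l p * TS p t s a s') (\<lambda>t ob a. \<Sum>p\<in>P. l p * DL p t ob a)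
    \<and> cuts T S Ob A pe pt (\<lambda>t s ob a. \<Sum>p\<in>P. l p * TO p t s ob a)
      (\<lambda>t s a s'. \<Sum>p\<in>P. l p * TS p t s a s') (\<lambda>t s' a' s ob a. \<Sum>p\<in>P. l p * X p t s' a' s ob a)"
proof -
  have relax: "\<forall>p\<in>P. Q_base T S Ob A p0 pt (TO p) (TS p) (DL p)"
    "\<forall>p\<in>P. mccormick T S Ob A p0 pe (TO p) (TS p) (DL p)"
    "\<forall>p\<in>P. cuts T S Ob A pe pt (TO p) (TS p) (X p)"
    and bounds: "\<And>p t ob a. p \<in> P \<Longrightarrow> t \<in> {1..T} \<Longrightarrow> ob \<in> Ob \<Longrightarrow> a \<in> A \<Longrightarrow>
      0 \<le> DL p t ob a \<and> DL p t ob a \<le> 1"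
    using assms unfolding inQd_relax_def by blast+
  have "0 \<le> (\<Sum>p\<in>P. l p * DL p t ob a)" if "t \<in> {1..T}" "ob \<in> Ob" "a \<in> A" for t ob a
    by (rule convex_comb_nonneg) (use bounds that in blast)
  moreover have "(\<Sum>p\<in>P. l p * DL p t ob a) \<le> 1" if "t \<in> {1..T}" "ob \<in> Ob" "a \<in> A" for t ob a
    using convex_comb_mono[of "\<lambda>p. DL p t ob a" "\<lambda>_. 1"] bounds[OF _ that] by (simp add: sum_l)
  ultimately show ?thesis
    unfolding inQd_relax_def
    by (intro conjI ballI Q_base_convex_comb[OF relax(1)] mccormick_convex_comb[OF relax(2)]
        cuts_convex_comb[OF relax(3)])
qed

end

section \<open>Lagrangian relaxation of a weakly coupled POMDP\<close>

locale weakly_coupled =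
  fixes T M :: nat
    and S :: "nat \<Rightarrow> 's set" and Ob :: "nat \<Rightarrow> 'ob set" and A :: "nat \<Rightarrow> 'a set"
    and p0 :: "nat \<Rightarrow> 's \<Rightarrow> real" and pe :: "nat \<Rightarrow> 's \<Rightarrow> 'ob \<Rightarrow> real"
    and pt :: "nat \<Rightarrow> 's \<Rightarrow> 'a \<Rightarrow> 's \<Rightarrow> real" and r :: "nat \<Rightarrow> 's \<Rightarrow> 'a \<Rightarrow> 's \<Rightarrow> real"
    and D :: "nat \<Rightarrow> 'a \<Rightarrow> 'k::finite \<Rightarrow> real" and b :: "'k \<Rightarrow> real"
  assumes wc: "weakly_coupled_pomdp M S Ob A p0 pe pt D b"
begin

lemma component: "m \<in> {1..M} \<Longrightarrow> pomdp_component (S m) (Ob m) (A m) (p0 m) (pe m) (pt m)"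
  using wc by (simp add: pomdp_component_def weakly_coupled_pomdp_def)

abbreviation stoch_policy_m :: "nat \<Rightarrow> (nat \<Rightarrow> 'ob \<Rightarrow> 'a \<Rightarrow> real) \<Rightarrow> bool" where
  "stoch_policy_m m \<equiv> pomdp_component.stoch_policy (Ob m) (A m) T"
abbreviation occ_soa_m :: "nat \<Rightarrow> (nat \<Rightarrow> 'ob \<Rightarrow> 'a \<Rightarrow> real) \<Rightarrow> nat \<Rightarrow> 's \<Rightarrow> 'ob \<Rightarrow> 'a \<Rightarrow> real" where
  "occ_soa_m m \<equiv> pomdp_component.occ_soa (S m) (Ob m) (A m) (p0 m) (pe m) (pt m)"
abbreviation occ_sas_m :: "nat \<Rightarrow> (nat \<Rightarrow> 'ob \<Rightarrow> 'a \<Rightarrow> real) \<Rightarrow> nat \<Rightarrow> 's \<Rightarrow> 'a \<Rightarrow> 's \<Rightarrow> real" where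
  "occ_sas_m m \<equiv> pomdp_component.occ_sas (S m) (Ob m) (A m) (p0 m) (pe m) (pt m)"
abbreviation occ_pair_m ::
    "nat \<Rightarrow> (nat \<Rightarrow> 'ob \<Rightarrow> 'a \<Rightarrow> real) \<Rightarrow> nat \<Rightarrow> 's \<Rightarrow> 'a \<Rightarrow> 's \<Rightarrow> 'ob \<Rightarrow> 'a \<Rightarrow> real" where
  "occ_pair_m m \<equiv> pomdp_component.occ_pair (S m) (Ob m) (A m) (p0 m) (pe m) (pt m)"
abbreviation policy_value_m :: "nat \<Rightarrow> (nat \<Rightarrow> 's \<Rightarrow> 'a \<Rightarrow> real) \<Rightarrow> (nat \<Rightarrow> 'ob \<Rightarrow> 'a \<Rightarrow> real) \<Rightarrow> real" where
  "policy_value_m m \<equiv> pomdp_component.policy_value (S m) (Ob m) (A m) (p0 m) (pe m) (pt m) T"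

definition lagr_reward :: "(nat \<Rightarrow> 'k \<Rightarrow> real) \<Rightarrow> nat \<Rightarrow> nat \<Rightarrow> 's \<Rightarrow> 'a \<Rightarrow> real" where
  "lagr_reward \<beta> m t s a = (\<Sum>s'\<in>S m. r m s a s' * pt m s a s') - (\<Sum>k\<in>UNIV. \<beta> t k * D m a k)"

definition lagr_const :: "(nat \<Rightarrow> 'k \<Rightarrow> real) \<Rightarrow> real" where
  "lagr_const \<beta> = (\<Sum>t\<in>{1..T}. \<Sum>k\<in>UNIV. \<beta> t k * b k)"

lemma objective_eq:
  assumes "\<forall>m\<in>{1..M}. Q_base T (S m) (Ob m) (A m) (p0 m) (pt m) (tsoa m) (tsas m) (dl m)"
  shows "objective T M S A r tsas = (\<Sum>t\<in>{1..T}. \<Sum>m\<in>{1..M}. \<Sum>s\<in>S m. \<Sum>ob\<in>Ob m. \<Sum>a\<in>A m.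
    tsoa m t s ob a * (\<Sum>s'\<in>S m. r m s a s' * pt m s a s'))"
  unfolding objective_def
proof (rule sum.cong[OF refl], rule sum.cong[OF refl])
  fix t m assume t: "t \<in> {1..T}" and m: "m \<in> {1..M}"
  have "(\<Sum>s'\<in>S m. r m s a s' * tsas m t s a s') = (\<Sum>s'\<in>S m. r m s a s' * pt m s a s') * (\<Sum>ob\<in>Ob m. tsoa m t s ob a)"
    if "s \<in> S m" "a \<in> A m" for s a
    using pomdp_component.Q_base_reward[OF component[OF m] assms[rule_format, OF m] t that] .
  then have "(\<Sum>s\<in>S m. \<Sum>a\<in>A m. \<Sum>s'\<in>S m. r m s a s' * tsas m t s a s') =
      (\<Sum>s\<in>S m. \<Sum>a\<in>A m. \<Sum>ob\<in>Ob m. tsoa m t s ob a * (\<Sum>s'\<in>S m. r m s a s' * pt m s a s'))"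
    by (simp add: sum_distrib_right mult.commute)
  also have "\<dots> = (\<Sum>s\<in>S m. \<Sum>ob\<in>Ob m. \<Sum>a\<in>A m. tsoa m t s ob a * (\<Sum>s'\<in>S m. r m s a s' * pt m s a s'))"
    by (intro sum.cong refl sum.swap)
  finally show "(\<Sum>s\<in>S m. \<Sum>a\<in>A m. \<Sum>s'\<in>S m. r m s a s' * tsas m t s a s') =
      (\<Sum>s\<in>S m. \<Sum>ob\<in>Ob m. \<Sum>a\<in>A m. tsoa m t s ob a * (\<Sum>s'\<in>S m. r m s a s' * pt m s a s'))" .
qed

lemma weighted_usage_eq:
  "(\<Sum>k\<in>UNIV. \<beta> t k * usage M S Ob A D tsoa t k) =
    (\<Sum>m\<in>{1..M}. \<Sum>s\<in>S m. \<Sum>ob\<in>Ob m. \<Sum>a\<in>A m. tsoa m t s ob a * (\<Sum>k\<in>UNIV. \<beta> t k * D m a k))"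
proof -
  have "(\<Sum>k\<in>UNIV. \<beta> t k * usage M S Ob A D tsoa t k) =
      (\<Sum>m\<in>{1..M}. \<Sum>s\<in>S m. \<Sum>ob\<in>Ob m. \<Sum>a\<in>A m. \<Sum>k\<in>UNIV. \<beta> t k * (D m a k * tsoa m t s ob a))"
    unfolding usage_def tau_a_def sum_mult_sum_commute by (simp add: sum_distrib_left mult_ac)
  then show ?thesis
    by (simp add: sum_distrib_left mult_ac)
qed

lemma lagr_objective_eq:
  assumes "\<forall>m\<in>{1..M}. Q_base T (S m) (Ob m) (A m) (p0 m) (pt m) (tsoa m) (tsas m) (dl m)"
  shows "lagr_objective T M S Ob A r D b \<beta> tsoa tsas = lagr_const \<beta> +
    (\<Sum>m\<in>{1..M}. \<Sum>t\<in>{1..T}. \<Sum>s\<in>S m. \<Sum>ob\<in>Ob m. \<Sum>a\<in>A m. tsoa m t s ob a * lagr_reward \<beta> m t s a)"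
proof -
  have "lagr_objective T M S Ob A r D b \<beta> tsoa tsas = lagr_const \<beta> +
      (\<Sum>t\<in>{1..T}. \<Sum>m\<in>{1..M}. \<Sum>s\<in>S m. \<Sum>ob\<in>Ob m. \<Sum>a\<in>A m. tsoa m t s ob a * lagr_reward \<beta> m t s a)"
    unfolding lagr_objective_def objective_eq[OF assms] lagr_const_def lagr_reward_def
    by (simp add: right_diff_distrib sum_subtractf weighted_usage_eq sum.distrib)
  also have "(\<Sum>t\<in>{1..T}. \<Sum>m\<in>{1..M}. \<Sum>s\<in>S m. \<Sum>ob\<in>Ob m. \<Sum>a\<in>A m. tsoa m t s ob a * lagr_reward \<beta> m t s a)
      = (\<Sum>m\<in>{1..M}. \<Sum>t\<in>{1..T}. \<Sum>s\<in>S m. \<Sum>ob\<in>Ob m. \<Sum>a\<in>A m. tsoa m t s ob a * lagr_reward \<beta> m t s a)"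
    by (rule sum.swap)
  finally show ?thesis .
qed

lemma lagr_objective_policy_value:
  assumes "\<forall>m\<in>{1..M}. inQ T (S m) (Ob m) (A m) (p0 m) (pe m) (pt m) (tsoa m) (tsas m) (dl m)"
  shows "lagr_objective T M S Ob A r D b \<beta> tsoa tsas =
    lagr_const \<beta> + (\<Sum>m\<in>{1..M}. policy_value_m m (lagr_reward \<beta> m) (dl m))"
proof -
  have "\<forall>m\<in>{1..M}. Q_base T (S m) (Ob m) (A m) (p0 m) (pt m) (tsoa m) (tsas m) (dl m)"
    using assms by (simp add: inQ_def)
  moreover have "tsoa m t s ob a = occ_soa_m m (dl m) t s ob a"
    if "m \<in> {1..M}" "t \<in> {1..T}" "s \<in> S m" "ob \<in> Ob m" "a \<in> A m" for m t s ob a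
    using assms that pomdp_component.inQ_imp_occ_soa[OF component] by blast
  ultimately show ?thesis
    by (simp add: lagr_objective_eq pomdp_component.policy_value_def[OF component])
qed


definition decision_points :: "(nat \<times> nat \<times> 'ob) set" where
  "decision_points = {(m, t, ob). m \<in> {1..M} \<and> t \<in> {1..T} \<and> ob \<in> Ob m}"

definition det_policies :: "(nat \<times> nat \<times> 'ob \<Rightarrow> 'a) set" where
  "det_policies = PiE decision_points (\<lambda>(m, t, ob). A m)"

definition det_rule :: "(nat \<times> nat \<times> 'ob \<Rightarrow> 'a) \<Rightarrow> nat \<Rightarrow> nat \<Rightarrow> 'ob \<Rightarrow> 'a \<Rightarrow> real" where
  "det_rule \<pi> m t ob a = (if \<pi> (m, t, ob) = a then 1 else 0)"

definition det_soa :: "(nat \<times> nat \<times> 'ob \<Rightarrow> 'a) \<Rightarrow> nat \<Rightarrow> nat \<Rightarrow> 's \<Rightarrow> 'ob \<Rightarrow> 'a \<Rightarrow> real" where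
  "det_soa \<pi> m = occ_soa_m m (det_rule \<pi> m)"
definition det_sas :: "(nat \<times> nat \<times> 'ob \<Rightarrow> 'a) \<Rightarrow> nat \<Rightarrow> nat \<Rightarrow> 's \<Rightarrow> 'a \<Rightarrow> 's \<Rightarrow> real" where
  "det_sas \<pi> m = occ_sas_m m (det_rule \<pi> m)"

definition det_value :: "(nat \<Rightarrow> 'k \<Rightarrow> real) \<Rightarrow> (nat \<times> nat \<times> 'ob \<Rightarrow> 'a) \<Rightarrow> real" where
  "det_value \<beta> \<pi> = lagr_objective T M S Ob A r D b \<beta> (det_soa \<pi>) (det_sas \<pi>)"

definition dual_fn :: "(nat \<Rightarrow> 'k \<Rightarrow> real) \<Rightarrow> real" where
  "dual_fn \<beta> = Max (det_value \<beta> ` det_policies)"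

lemma finite_det_policies: "finite det_policies"
proof -
  have "finite (Sigma {1..M} (\<lambda>m. {1..T} \<times> Ob m))"
    using pomdp_component.finite_Ob[OF component] by auto
  moreover have "decision_points \<subseteq> Sigma {1..M} (\<lambda>m. {1..T} \<times> Ob m)"
    by (auto simp: decision_points_def)
  ultimately have "finite decision_points"
    by (rule finite_subset[rotated])
  then show ?thesis
    using pomdp_component.finite_A[OF component]
    unfolding det_policies_def by (intro finite_PiE) (auto simp: decision_points_def)
qed

lemma det_policies_nonempty: "det_policies \<noteq> {}"
  using pomdp_component.A_nonempty[OF component]
  by (auto simp: det_policies_def PiE_eq_empty_iff decision_points_def)

lemma stoch_policy_det_rule: "\<pi> \<in> det_policies \<Longrightarrow> m \<in> {1..M} \<Longrightarrow> stoch_policy_m m (det_rule \<pi> m)"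
  using pomdp_component.finite_A[OF component, of m]
  by (auto simp: pomdp_component.stoch_policy_def[OF component] det_rule_def det_policies_def
      decision_points_def PiE_def Pi_def)

lemma det_policy_inQd:
  "\<pi> \<in> det_policies \<Longrightarrow> m \<in> {1..M} \<Longrightarrow>
    inQd T (S m) (Ob m) (A m) (p0 m) (pe m) (pt m) (det_soa \<pi> m) (det_sas \<pi> m) (det_rule \<pi> m)"
  unfolding det_soa_def det_sas_def
  by (rule pomdp_component.inQd_occ[OF component stoch_policy_det_rule]) (auto simp: det_rule_def)

lemma det_policy_inQ:
  "\<pi> \<in> det_policies \<Longrightarrow> m \<in> {1..M} \<Longrightarrow>
    inQ T (S m) (Ob m) (A m) (p0 m) (pe m) (pt m) (det_soa \<pi> m) (det_sas \<pi> m) (det_rule \<pi> m)"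
  using det_policy_inQd pomdp_component.inQd_imp_inQ[OF component] by blast

lemma det_policy_relax_cuts:
  "\<pi> \<in> det_policies \<Longrightarrow> m \<in> {1..M} \<Longrightarrow>
    inQd_relax T (S m) (Ob m) (A m) (p0 m) (pe m) (pt m) (det_soa \<pi> m) (det_sas \<pi> m) (det_rule \<pi> m) \<and>
    cuts T (S m) (Ob m) (A m) (pe m) (pt m) (det_soa \<pi> m) (det_sas \<pi> m) (occ_pair_m m (det_rule \<pi> m))"
  unfolding det_soa_def det_sas_def using stoch_policy_det_rule
  by (simp add: pomdp_component.inQd_relax_occ[OF component] pomdp_component.cuts_occ[OF component])

lemma exists_det_policy:
  assumes "\<forall>m\<in>{1..M}. stoch_policy_m m (f m) \<and> (\<forall>t\<in>{1..T}. \<forall>ob\<in>Ob m. \<forall>a\<in>A m. f m t ob a = 0 \<or> f m t ob a = 1)"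
  shows "\<exists>\<pi>\<in>det_policies. \<forall>m\<in>{1..M}. \<forall>t\<in>{1..T}. \<forall>ob\<in>Ob m. \<forall>a\<in>A m. det_rule \<pi> m t ob a = f m t ob a"
proof -
  define choice where "choice m t ob = (SOME a0. a0 \<in> A m \<and> (\<forall>a\<in>A m. f m t ob a = (if a = a0 then 1 else 0)))"
    for m t ob
  have choice: "choice m t ob \<in> A m \<and> (\<forall>a\<in>A m. f m t ob a = (if a = choice m t ob then 1 else 0))"
    if "(m, t, ob) \<in> decision_points" for m t ob
    unfolding choice_def
  proof (rule someI_ex)
    have "m \<in> {1..M}" "t \<in> {1..T}" "ob \<in> Ob m"
      using that by (auto simp: decision_points_def)
    then show "\<exists>a0. a0 \<in> A m \<and> (\<forall>a\<in>A m. f m t ob a = (if a = a0 then 1 else 0))"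
      using assms pomdp_component.binary_stoch_policy_point_mass[OF component] by blast
  qed
  define \<pi> where "\<pi> = (\<lambda>(m, t, ob)\<in>decision_points. choice m t ob)"
  have "\<pi> \<in> det_policies"
    using choice by (auto simp: \<pi>_def det_policies_def)
  moreover have "det_rule \<pi> m t ob a = f m t ob a"
    if "m \<in> {1..M}" "t \<in> {1..T}" "ob \<in> Ob m" "a \<in> A m" for m t ob a
    using choice[of m t ob] that by (auto simp: \<pi>_def det_rule_def decision_points_def)
  ultimately show ?thesis
    by blast
qed

lemma det_value_eq:
  "\<pi> \<in> det_policies \<Longrightarrow>
    det_value \<beta> \<pi> = lagr_const \<beta> + (\<Sum>m\<in>{1..M}. policy_value_m m (lagr_reward \<beta> m) (det_rule \<pi> m))"
  unfolding det_value_def by (rule lagr_objective_policy_value) (use det_policy_inQ in blast)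

lemma det_value_le_dual_fn: "\<pi> \<in> det_policies \<Longrightarrow> det_value \<beta> \<pi> \<le> dual_fn \<beta>"
  unfolding dual_fn_def using finite_det_policies by simp

lemma dual_fn_attained: "\<exists>\<pi>\<in>det_policies. dual_fn \<beta> = det_value \<beta> \<pi>"
proof -
  have "dual_fn \<beta> \<in> det_value \<beta> ` det_policies"
    unfolding dual_fn_def using finite_det_policies det_policies_nonempty by (intro Max_in) auto
  then show ?thesis
    by auto
qed

lemma lagr_objective_le_dual_fn:
  assumes Q: "\<forall>m\<in>{1..M}. inQ T (S m) (Ob m) (A m) (p0 m) (pe m) (pt m) (tsoa m) (tsas m) (dl m)"
  shows "lagr_objective T M S Ob A r D b \<beta> tsoa tsas \<le> dual_fn \<beta>"
proof -
  have "\<forall>m\<in>{1..M}. \<exists>\<delta>. stoch_policy_m m \<delta> \<and> (\<forall>t\<in>{1..T}. \<forall>ob\<in>Ob m. \<forall>a\<in>A m. \<delta> t ob a = 0 \<or> \<delta> t ob a = 1)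
      \<and> policy_value_m m (lagr_reward \<beta> m) (dl m) \<le> policy_value_m m (lagr_reward \<beta> m) \<delta>"
    using Q pomdp_component.exists_deterministic_policy_ge[OF component]
      pomdp_component.inQ_imp_stoch_policy[OF component] by blast
  then obtain f where f: "\<forall>m\<in>{1..M}. stoch_policy_m m (f m)
      \<and> (\<forall>t\<in>{1..T}. \<forall>ob\<in>Ob m. \<forall>a\<in>A m. f m t ob a = 0 \<or> f m t ob a = 1)
      \<and> policy_value_m m (lagr_reward \<beta> m) (dl m) \<le> policy_value_m m (lagr_reward \<beta> m) (f m)"
    by metis
  then obtain \<pi> where \<pi>: "\<pi> \<in> det_policies"
    and eq: "\<forall>m\<in>{1..M}. \<forall>t\<in>{1..T}. \<forall>ob\<in>Ob m. \<forall>a\<in>A m. det_rule \<pi> m t ob a = f m t ob a"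
    using exists_det_policy by blast
  have "policy_value_m m (lagr_reward \<beta> m) (dl m) \<le> policy_value_m m (lagr_reward \<beta> m) (det_rule \<pi> m)"
    if "m \<in> {1..M}" for m
    using f eq that pomdp_component.policy_value_cong[OF component, of m T "det_rule \<pi> m" "f m"] by auto
  then have "(\<Sum>m\<in>{1..M}. policy_value_m m (lagr_reward \<beta> m) (dl m))
      \<le> (\<Sum>m\<in>{1..M}. policy_value_m m (lagr_reward \<beta> m) (det_rule \<pi> m))"
    by (rule sum_mono)
  then have "lagr_objective T M S Ob A r D b \<beta> tsoa tsas \<le> det_value \<beta> \<pi>"
    by (simp add: lagr_objective_policy_value[OF Q] det_value_eq[OF \<pi>])
  also have "\<dots> \<le> dual_fn \<beta>"
    by (rule det_value_le_dual_fn[OF \<pi>])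
  finally show ?thesis .
qed

lemma Sup_lagr_inQ:
  "Sup {lagr_objective T M S Ob A r D b \<beta> tsoa tsas | tsoa tsas dl.
     \<forall>m\<in>{1..M}. inQ T (S m) (Ob m) (A m) (p0 m) (pe m) (pt m) (tsoa m) (tsas m) (dl m)} = dual_fn \<beta>"
proof (rule cSup_eq_maximum)
  obtain \<pi> where "\<pi> \<in> det_policies" "dual_fn \<beta> = det_value \<beta> \<pi>"
    using dual_fn_attained by blast
  then show "dual_fn \<beta> \<in> {lagr_objective T M S Ob A r D b \<beta> tsoa tsas | tsoa tsas dl.
      \<forall>m\<in>{1..M}. inQ T (S m) (Ob m) (A m) (p0 m) (pe m) (pt m) (tsoa m) (tsas m) (dl m)}"
    unfolding det_value_def using det_policy_inQ by blast
qed (use lagr_objective_le_dual_fn in blast)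

lemma Sup_lagr_inQd:
  "Sup {lagr_objective T M S Ob A r D b \<beta> tsoa tsas | tsoa tsas dl.
     \<forall>m\<in>{1..M}. inQd T (S m) (Ob m) (A m) (p0 m) (pe m) (pt m) (tsoa m) (tsas m) (dl m)} = dual_fn \<beta>"
proof (rule cSup_eq_maximum)
  obtain \<pi> where "\<pi> \<in> det_policies" "dual_fn \<beta> = det_value \<beta> \<pi>"
    using dual_fn_attained by blast
  then show "dual_fn \<beta> \<in> {lagr_objective T M S Ob A r D b \<beta> tsoa tsas | tsoa tsas dl.
      \<forall>m\<in>{1..M}. inQd T (S m) (Ob m) (A m) (p0 m) (pe m) (pt m) (tsoa m) (tsas m) (dl m)}"
    unfolding det_value_def using det_policy_inQd by blast
qed (use lagr_objective_le_dual_fn pomdp_component.inQd_imp_inQ[OF component] in blast)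

definition multipliers :: "(nat \<Rightarrow> 'k \<Rightarrow> real) set" where
  "multipliers = {\<beta>. \<forall>t\<in>{1..T}. \<forall>k. 0 \<le> \<beta> t k}"

lemma z_LR_UB_eq: "z_LR_UB T M S Ob A p0 pe pt r D b = Inf (dual_fn ` multipliers)"
  unfolding z_LR_UB_def multipliers_def [symmetric] Sup_lagr_inQ ..

lemma z_LR_IP_eq: "z_LR_IP T M S Ob A p0 pe pt r D b = Inf (dual_fn ` multipliers)"
  unfolding z_LR_IP_def multipliers_def [symmetric] Sup_lagr_inQd ..


definition feasible_action :: "nat \<Rightarrow> 'a" where
  "feasible_action = (SOME act. (\<forall>m\<in>{1..M}. act m \<in> A m) \<and> (\<forall>k. (\<Sum>m\<in>{1..M}. D m (act m) k) \<le> b k))"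

lemma feasible_action: "\<forall>m\<in>{1..M}. feasible_action m \<in> A m" "\<forall>k. (\<Sum>m\<in>{1..M}. D m (feasible_action m) k) \<le> b k"
  using someI_ex[of "\<lambda>act. (\<forall>m\<in>{1..M}. act m \<in> A m) \<and> (\<forall>k. (\<Sum>m\<in>{1..M}. D m (act m) k) \<le> b k)"] wc
  unfolding feasible_action_def weakly_coupled_pomdp_def by blast+

definition feasible_policy :: "nat \<times> nat \<times> 'ob \<Rightarrow> 'a" where
  "feasible_policy = (\<lambda>(m, t, ob)\<in>decision_points. feasible_action m)"

lemma feasible_policy_det: "feasible_policy \<in> det_policies"
  using feasible_action(1) by (auto simp: feasible_policy_def det_policies_def decision_points_def)

lemma tau_a_feasible_policy:
  assumes m: "m \<in> {1..M}" and "t \<in> {1..T}" "a \<in> A m"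
  shows "tau_a S Ob (det_soa feasible_policy) m t a = (if a = feasible_action m then 1 else 0)"
proof -
  interpret pomdp_component "S m" "Ob m" "A m" "p0 m" "pe m" "pt m"
    by (rule component[OF m])
  have "tau_a S Ob (det_soa feasible_policy) m t a
      = (if a = feasible_action m then 1 else 0) * (\<Sum>s\<in>S m. state_prob (det_rule feasible_policy m) (t - 1) s * (\<Sum>ob\<in>Ob m. pe m s ob))"
    using assms by (simp add: tau_a_def det_soa_def occ_soa_def det_rule_def feasible_policy_def decision_points_def
        sum_distrib_left sum_distrib_right mult_ac)
  also have "\<dots> = (if a = feasible_action m then 1 else 0)"
  proof -
    have "t - 1 < T"
      using assms(2) by auto
    then show ?thesis
      using sum_state_prob[OF stoch_policy_det_rule[OF feasible_policy_det m]] by (simp add: sum_pe)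
  qed
  finally show ?thesis .
qed

lemma linking_feasible_policy: "linking T M S Ob A D b (det_soa feasible_policy)"
  unfolding linking_def
proof (intro ballI allI)
  fix t k assume "t \<in> {1..T}"
  then have "usage M S Ob A D (det_soa feasible_policy) t k = (\<Sum>m\<in>{1..M}. D m (feasible_action m) k)"
    using feasible_action(1) pomdp_component.finite_A[OF component]
    by (simp add: usage_def tau_a_feasible_policy if_distrib [of "\<lambda>x. _ * x"] cong: if_cong)
  then show "usage M S Ob A D (det_soa feasible_policy) t k \<le> b k"
    using feasible_action(2) by simp
qed

lemma objective_le_lagr_objective:
  "linking T M S Ob A D b tsoa \<Longrightarrow> \<beta> \<in> multipliers \<Longrightarrow>
    objective T M S A r tsas \<le> lagr_objective T M S Ob A r D b \<beta> tsoa tsas"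
  by (auto simp: lagr_objective_def linking_def multipliers_def intro!: sum_nonneg mult_nonneg_nonneg)

lemma multipliers_nonempty: "multipliers \<noteq> {}"
  by (auto simp: multipliers_def intro!: exI[of _ "\<lambda>_ _. 0"])

lemma dual_fn_bdd_below: "bdd_below (dual_fn ` multipliers)"
proof (rule bdd_belowI2)
  fix \<beta> assume "\<beta> \<in> multipliers"
  then show "objective T M S A r (det_sas feasible_policy) \<le> dual_fn \<beta>"
    using objective_le_lagr_objective[OF linking_feasible_policy] det_value_le_dual_fn[OF feasible_policy_det]
    unfolding det_value_def by (meson order_trans)
qed

theorem z_UB_le_dual: "z_UB T M S Ob A p0 pe pt r D b \<le> Inf (dual_fn ` multipliers)"
  unfolding z_UB_def
proof (intro cInf_greatest cSup_least)
  show "{objective T M S A r tsas | tsoa tsas dl.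
      (\<forall>m\<in>{1..M}. inQ T (S m) (Ob m) (A m) (p0 m) (pe m) (pt m) (tsoa m) (tsas m) (dl m)) \<and>
      linking T M S Ob A D b tsoa} \<noteq> {}"
    using feasible_policy_det det_policy_inQ linking_feasible_policy by blast
  fix z x assume "z \<in> dual_fn ` multipliers" and "x \<in> {objective T M S A r tsas | tsoa tsas dl.
      (\<forall>m\<in>{1..M}. inQ T (S m) (Ob m) (A m) (p0 m) (pe m) (pt m) (tsoa m) (tsas m) (dl m)) \<and>
      linking T M S Ob A D b tsoa}"
  then obtain \<beta> tsoa tsas dl where \<beta>: "\<beta> \<in> multipliers" "z = dual_fn \<beta>"
    and x: "x = objective T M S A r tsas" "linking T M S Ob A D b tsoa"
    and Q: "\<forall>m\<in>{1..M}. inQ T (S m) (Ob m) (A m) (p0 m) (pe m) (pt m) (tsoa m) (tsas m) (dl m)"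
    by blast
  have "x \<le> lagr_objective T M S Ob A r D b \<beta> tsoa tsas"
    using objective_le_lagr_objective[OF x(2) \<beta>(1)] x(1) by simp
  also have "\<dots> \<le> z"
    using lagr_objective_le_dual_fn[OF Q] \<beta>(2) by simp
  finally show "x \<le> z" .
qed (use multipliers_nonempty in blast)

definition values_R :: "real set" where
  "values_R = {objective T M S A r tsas | tsoa tsas dl.
     (\<forall>m\<in>{1..M}. inQd_relax T (S m) (Ob m) (A m) (p0 m) (pe m) (pt m) (tsoa m) (tsas m) (dl m)) \<and>
     linking T M S Ob A D b tsoa}"

definition values_Rc :: "real set" where
  "values_Rc = {objective T M S A r tsas | tsoa tsas dl x.
     (\<forall>m\<in>{1..M}. inQd_relax T (S m) (Ob m) (A m) (p0 m) (pe m) (pt m) (tsoa m) (tsas m) (dl m) \<and>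
        cuts T (S m) (Ob m) (A m) (pe m) (pt m) (tsoa m) (tsas m) (x m)) \<and>
     linking T M S Ob A D b tsoa}"

lemma values_RcI:
  "\<forall>m\<in>{1..M}. inQd_relax T (S m) (Ob m) (A m) (p0 m) (pe m) (pt m) (tsoa m) (tsas m) (dl m) \<and>
      cuts T (S m) (Ob m) (A m) (pe m) (pt m) (tsoa m) (tsas m) (x m) \<Longrightarrow>
    linking T M S Ob A D b tsoa \<Longrightarrow> objective T M S A r tsas \<in> values_Rc"
  unfolding values_Rc_def by blast

lemma objective_le_abs_rewards:
  assumes "\<forall>m\<in>{1..M}. Q_base T (S m) (Ob m) (A m) (p0 m) (pt m) (tsoa m) (tsas m) (dl m)"
  shows "objective T M S A r tsas \<le> (\<Sum>t\<in>{1..T}. \<Sum>m\<in>{1..M}. \<Sum>s\<in>S m. \<Sum>a\<in>A m. \<Sum>s'\<in>S m. \<bar>r m s a s'\<bar>)"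
  unfolding objective_def
proof (intro sum_mono)
  fix t m s a s' assume t: "t \<in> {1..T}" and m: "m \<in> {1..M}" and "s \<in> S m" "a \<in> A m" "s' \<in> S m"
  have Q: "Q_base T (S m) (Ob m) (A m) (p0 m) (pt m) (tsoa m) (tsas m) (dl m)"
    using assms m by blast
  have "0 \<le> tsas m t s a s'" "tsas m t s a s' \<le> 1"
    using Q t \<open>s \<in> S m\<close> \<open>a \<in> A m\<close> \<open>s' \<in> S m\<close> pomdp_component.Q_base_tsas_le_1[OF component[OF m] Q t]
    unfolding Q_base_def by blast+
  then have "r m s a s' * tsas m t s a s' \<le> \<bar>r m s a s'\<bar> * tsas m t s a s'"
    by (intro mult_right_mono) auto
  also have "\<dots> \<le> \<bar>r m s a s'\<bar>"
    using \<open>tsas m t s a s' \<le> 1\<close> by (simp add: mult_left_le)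
  finally show "r m s a s' * tsas m t s a s' \<le> \<bar>r m s a s'\<bar>" .
qed

lemma values_R_bdd_above: "bdd_above values_R"
proof (rule bdd_aboveI)
  fix x assume "x \<in> values_R"
  then obtain tsoa tsas dl where "x = objective T M S A r tsas"
    and "\<forall>m\<in>{1..M}. Q_base T (S m) (Ob m) (A m) (p0 m) (pt m) (tsoa m) (tsas m) (dl m)"
    unfolding values_R_def inQd_relax_def by blast
  then show "x \<le> (\<Sum>t\<in>{1..T}. \<Sum>m\<in>{1..M}. \<Sum>s\<in>S m. \<Sum>a\<in>A m. \<Sum>s'\<in>S m. \<bar>r m s a s'\<bar>)"
    using objective_le_abs_rewards by simp
qed

lemma values_Rc_subset: "values_Rc \<subseteq> values_R"
  unfolding values_Rc_def values_R_def by blast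

lemma mixture_in_values_Rc:
  assumes w: "\<forall>\<pi>\<in>det_policies. 0 \<le> w \<pi>" "(\<Sum>\<pi>\<in>det_policies. w \<pi>) = 1"
    and link: "\<forall>t\<in>{1..T}. \<forall>k. 0 \<le> (\<Sum>\<pi>\<in>det_policies. w \<pi> * (b k - usage M S Ob A D (det_soa \<pi>) t k))"
  shows "(\<Sum>\<pi>\<in>det_policies. w \<pi> * objective T M S A r (det_sas \<pi>)) \<in> values_Rc"
proof -
  define tsoa where "tsoa m t s ob a = (\<Sum>\<pi>\<in>det_policies. w \<pi> * det_soa \<pi> m t s ob a)" for m t s ob a
  define tsas where "tsas m t s a s' = (\<Sum>\<pi>\<in>det_policies. w \<pi> * det_sas \<pi> m t s a s')" for m t s a s'
  define dl where "dl m t ob a = (\<Sum>\<pi>\<in>det_policies. w \<pi> * det_rule \<pi> m t ob a)" for m t ob a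
  define x where "x m t s' a' s ob a = (\<Sum>\<pi>\<in>det_policies. w \<pi> * occ_pair_m m (det_rule \<pi> m) t s' a' s ob a)"
    for m t s' a' s ob a
  have "\<forall>m\<in>{1..M}. inQd_relax T (S m) (Ob m) (A m) (p0 m) (pe m) (pt m) (tsoa m) (tsas m) (dl m) \<and>
      cuts T (S m) (Ob m) (A m) (pe m) (pt m) (tsoa m) (tsas m) (x m)"
  proof
    fix m assume "m \<in> {1..M}"
    then show "inQd_relax T (S m) (Ob m) (A m) (p0 m) (pe m) (pt m) (tsoa m) (tsas m) (dl m) \<and>
      cuts T (S m) (Ob m) (A m) (pe m) (pt m) (tsoa m) (tsas m) (x m)"
      unfolding tsoa_def tsas_def dl_def x_def
    using inQd_relax_cuts_convex_comb[OF finite_det_policies w, where TO = "\<lambda>\<pi>. det_soa \<pi> m"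
        and TS = "\<lambda>\<pi>. det_sas \<pi> m" and DL = "\<lambda>\<pi>. det_rule \<pi> m" and X = "\<lambda>\<pi>. occ_pair_m m (det_rule \<pi> m)"]
        det_policy_relax_cuts
      by blast
  qed
  moreover have "linking T M S Ob A D b tsoa"
    unfolding linking_def
  proof (intro ballI allI)
    fix t k assume "t \<in> {1..T}"
    have "tau_a S Ob tsoa m t a = (\<Sum>\<pi>\<in>det_policies. w \<pi> * tau_a S Ob (det_soa \<pi>) m t a)" for m a
      unfolding tau_a_def tsoa_def sum_mult_sum_commute ..
    then have "usage M S Ob A D tsoa t k = (\<Sum>\<pi>\<in>det_policies. w \<pi> * usage M S Ob A D (det_soa \<pi>) t k)"
      unfolding usage_def sum_mult_sum_commute by (simp add: sum_distrib_left mult_ac)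
    then show "usage M S Ob A D tsoa t k \<le> b k"
      using link \<open>t \<in> {1..T}\<close> w(2) by (simp add: right_diff_distrib sum_subtractf sum_distrib_right [symmetric])
  qed
  ultimately have "objective T M S A r tsas \<in> values_Rc"
    by (rule values_RcI)
  moreover have "objective T M S A r tsas = (\<Sum>t\<in>{1..T}. \<Sum>m\<in>{1..M}. \<Sum>s\<in>S m. \<Sum>a\<in>A m. \<Sum>s'\<in>S m.
      \<Sum>\<pi>\<in>det_policies. w \<pi> * (r m s a s' * det_sas \<pi> m t s a s'))"
    by (simp add: objective_def tsas_def sum_distrib_left mult.left_commute)
  moreover have "\<dots> = (\<Sum>\<pi>\<in>det_policies. w \<pi> * objective T M S A r (det_sas \<pi>))"
    unfolding objective_def sum_mult_sum_commute ..
  ultimately show ?thesis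
    by simp
qed

theorem dual_le_z_Rc: "Inf (dual_fn ` multipliers) \<le> z_Rc T M S Ob A p0 pe pt r D b"
proof -
  define J where "J = {1..T} \<times> (UNIV :: 'k set)"
  define g where "g \<pi> j = b (snd j) - usage M S Ob A D (det_soa \<pi>) (fst j) (snd j)" for \<pi> j
  have bdd: "bdd_above values_Rc"
    using values_R_bdd_above values_Rc_subset by (rule bdd_above_mono)
  have "\<exists>\<beta>'. (\<forall>j\<in>J. 0 \<le> \<beta>' j) \<and>
      (\<forall>\<pi>\<in>det_policies. objective T M S A r (det_sas \<pi>) + (\<Sum>j\<in>J. g \<pi> j * \<beta>' j) \<le> Sup values_Rc)"
  proof (rule lagrangian_duality[OF finite_det_policies])
    fix w assume "\<forall>\<pi>\<in>det_policies. 0 \<le> w \<pi>" "(\<Sum>\<pi>\<in>det_policies. w \<pi>) = 1"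
      "\<forall>j\<in>J. 0 \<le> (\<Sum>\<pi>\<in>det_policies. w \<pi> * g \<pi> j)"
    then have "(\<Sum>\<pi>\<in>det_policies. w \<pi> * objective T M S A r (det_sas \<pi>)) \<in> values_Rc"
      by (intro mixture_in_values_Rc) (auto simp: J_def g_def)
    then show "(\<Sum>\<pi>\<in>det_policies. w \<pi> * objective T M S A r (det_sas \<pi>)) \<le> Sup values_Rc"
      using bdd by (rule cSup_upper)
  qed (simp add: J_def)
  then obtain \<beta>' where \<beta>': "\<forall>j\<in>J. 0 \<le> \<beta>' j"
    "\<forall>\<pi>\<in>det_policies. objective T M S A r (det_sas \<pi>) + (\<Sum>j\<in>J. g \<pi> j * \<beta>' j) \<le> Sup values_Rc"
    by blast
  define \<beta> where "\<beta> t k = \<beta>' (t, k)" for t k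
  have "\<beta> \<in> multipliers"
    using \<beta>'(1) by (simp add: multipliers_def \<beta>_def J_def)
  moreover have "det_value \<beta> \<pi> = objective T M S A r (det_sas \<pi>) + (\<Sum>j\<in>J. g \<pi> j * \<beta>' j)" for \<pi>
  proof -
    have "(\<Sum>j\<in>J. g \<pi> j * \<beta>' j) = (\<Sum>t\<in>{1..T}. \<Sum>k\<in>UNIV. g \<pi> (t, k) * \<beta>' (t, k))"
      unfolding J_def by (simp add: sum.cartesian_product)
    then show ?thesis
      by (simp add: det_value_def lagr_objective_def g_def \<beta>_def mult.commute)
  qed
  moreover obtain \<pi> where "\<pi> \<in> det_policies" "dual_fn \<beta> = det_value \<beta> \<pi>"
    using dual_fn_attained by blast
  ultimately have "dual_fn \<beta> \<le> Sup values_Rc"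
    using \<beta>'(2) by simp
  then have "Inf (dual_fn ` multipliers) \<le> Sup values_Rc"
    by (rule cInf_lower2[OF imageI[OF \<open>\<beta> \<in> multipliers\<close>] _ dual_fn_bdd_below])
  then show ?thesis
    by (simp add: z_Rc_def values_Rc_def)
qed

theorem z_Rc_le_z_R: "z_Rc T M S Ob A p0 pe pt r D b \<le> z_R T M S Ob A p0 pe pt r D b"
proof -
  have "objective T M S A r (det_sas feasible_policy) \<in> values_Rc"
    using det_policy_relax_cuts[OF feasible_policy_det] linking_feasible_policy
    by (intro values_RcI[where dl = "det_rule feasible_policy" and x = "\<lambda>m. occ_pair_m m (det_rule feasible_policy m)"]
        ballI) auto
  then have "Sup values_Rc \<le> Sup values_R"
    using values_R_bdd_above values_Rc_subset by (intro cSup_subset_mono) auto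
  then show ?thesis
    by (simp add: z_Rc_def z_R_def values_Rc_def values_R_def)
qed

end

theorem mainTheorem7:
  fixes T M :: nat
    and S :: "nat \<Rightarrow> 's set" and Ob :: "nat \<Rightarrow> 'ob set" and A :: "nat \<Rightarrow> 'a set"
    and p0 :: "nat \<Rightarrow> 's \<Rightarrow> real" and pe :: "nat \<Rightarrow> 's \<Rightarrow> 'ob \<Rightarrow> real"
    and pt :: "nat \<Rightarrow> 's \<Rightarrow> 'a \<Rightarrow> 's \<Rightarrow> real" and r :: "nat \<Rightarrow> 's \<Rightarrow> 'a \<Rightarrow> 's \<Rightarrow> real"
    and D :: "nat \<Rightarrow> 'a \<Rightarrow> 'k::finite \<Rightarrow> real" and b :: "'k \<Rightarrow> real"
  assumes "weakly_coupled_pomdp M S Ob A p0 pe pt D b"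
  shows "z_LR_IP T M S Ob A p0 pe pt r D b = z_LR_UB T M S Ob A p0 pe pt r D b \<and>
         z_UB T M S Ob A p0 pe pt r D b \<le> z_LR_UB T M S Ob A p0 pe pt r D b \<and>
         z_LR_UB T M S Ob A p0 pe pt r D b \<le> z_Rc T M S Ob A p0 pe pt r D b \<and>
         z_Rc T M S Ob A p0 pe pt r D b \<le> z_R T M S Ob A p0 pe pt r D b"
proof -
  interpret weakly_coupled T M S Ob A p0 pe pt r D b
    by (rule weakly_coupled.intro) (fact assms)
  show ?thesis
    using z_LR_IP_eq z_LR_UB_eq z_UB_le_dual dual_le_z_Rc z_Rc_le_z_R by simp
qed

end
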